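(* Let $0<\alpha<\beta<\infty$, $\mathcal{F}\subset\mathcal{F}_B^{[\alpha,\beta]}$ star-shaped with $L_2$-diameter $d$, $f\in\mathcal{F}$, $\epsilon\in(0,\tfrac13]$ with $k=1/(3\epsilon)$ an integer dividing $N$, and $\mathbf X$ the observed sample from $\tilde X_1,\dots,\tilde X_N$ i.i.d. with density $f$ after an arbitrary corruption of at most $\epsilon N$ observations. Let $c>0$ be a sufficiently large constant (chosen independently of the data), $C=\frac c2-1$, and $C_{10}$ as below. For $J\in\mathbb{N}$ let $\tau_J=\frac{\sqrt{C_{10}}\,d}{2^{J-1}(C+1)}$, and let $\bar J$ be the maximal $J\in\mathbb{N}$ with $$N\tau_J^2>\max\Big\{2\log\Big(\big[\mathcal{M}^{\mathrm{loc}}_{\mathcal{F}}\big(\tau_J\tfrac{c}{\sqrt{C_{10}}},2c\big)\big]^2\Big),\ \log2\Big\},$$ or $\bar J=1$ if no such $J$ exists. Let $\nu^*$ be the output of the multistage estimator below run with $\tilde J\ge\bar J$ levels. Then $$\mathbb{E}_f\|\nu^*-f\|_2^2\lesssim\max\{\tau_{\bar J}^2,\epsilon\}\wedge d^2 .$$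
   Context: $B\subseteq\mathbb{R}^p$ compact Borel with positive measure, $\mu$ a probability measure on $B$; $\mathcal{F}_B^{[\alpha,\beta]}$ the measurable $f:B\to[\alpha,\beta]$ with $\int_Bf\,d\mu=1$; $\|f-g\|_2=(\int_B(f-g)^2d\mu)^{1/2}$; $B_2(q,r)$ the closed $L_2$ ball; $\mathcal{F}$ star-shaped (some $f_0\in\mathcal{F}$ with $tf+(1-t)f_0\in\mathcal{F}$ for $f\in\mathcal{F},t\in[0,1]$). An $\eta$-packing of $S$ is a subset of $S$ with pairwise distances $>\eta$; $\mathcal{M}(\eta,S)$ is the maximal cardinality of such a set; local metric entropy: $\mathcal{M}^{\mathrm{loc}}_{\mathcal{F}}(\tau,c')=\sup_{g\in\mathcal{F}}\mathcal{M}(\tau/c',\mathcal{F}\cap B_2(g,\tau))$. Constants: $h(\gamma)=\frac{\gamma-1-\log\gamma}{(\gamma-1)^2}$ ($\gamma\ne1$), $h(1)=\frac12$, $c(\alpha,\beta)=h(\beta/\alpha)/\beta$, $K=\beta/(\alpha^2c(\alpha,\beta))$, $L(\alpha,\beta,C)=\frac{\{\sqrt{c(\alpha,\beta)}(C-1)-\sqrt{1/\alpha}\}^2}{2(2K+\frac23\log(\beta/\alpha))}$ with $C>1+\sqrt{1/(\alpha c(\alpha,\beta))}$, and $C_{10}=\frac{L(\alpha,\beta,C)}{4}(\frac12-\frac\phi3)$ for a fixed $\phi\in(1,\frac32)$. Comparison: with a fixed partition $G_1,\dots,G_{N/k}$ of $\{1,\dots,N\}$ into groups of size $k$, $\psi(g,g',\mathbf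 X)=\mathbb{1}\big(\sum_{j}\mathbb{1}(\sum_{i\in G_j}\log\frac{g(X_i)}{g'(X_i)}>0)\ge\frac N{2k}\big)$, and $g'\prec g$ means $\psi(g,g',\mathbf X)=1$. Selection rule on a finite set $\{u_1,\dots,u_M\}$ at scale $\delta$: $E_i=\{j:u_i\prec u_j,\|u_i-u_j\|_2\ge C\delta\}$, $T_i=\max_{j\in E_i}\|u_i-u_j\|_2$ (or $0$ if $E_i=\emptyset$), select $u_{i^*}$ with $i^*\in\operatorname{argmin}_iT_i$. Estimator (tree built before seeing data): pick an arbitrary root $\nu_1\in\mathcal{F}$, level $\mathcal{L}(1)=\{\nu_1\}$. Level 2: the offspring of $\nu_1$ form a maximal $d/c$-packing of $\mathcal{F}$. For $3\le j\le\tilde J$: for each $q\in\mathcal{L}(j-1)$ take a maximal $\frac{d}{2^{j-1}c}$-packing of $B_2(q,d/2^{j-2})\cap\mathcal{F}$ as candidate offspring of $q$; list all candidates in a fixed order and, while the list is nonempty, take its first element $q_l$, let $T$ be the other listed candidates within distance $\frac{d}{2^{j-1}c}$ of $q_l$, replace each member of $T$ among its parent's offspring by $q_l$, and remove $q_l$ and $T$ from the list; $\mathcal{L}(j)$ is the union of the resulting offspring sets. Then, using the data, for $j=2,\dots,\tilde J$ set $\nu_j$ to be the element of the offspring set of $\nu_{j-1}$ chosen by the selection rule at scale $\delta_j=\frac{d}{2^{j-2}c}$; output $\nu^*=\nu_{\tilde J}$. $\lesssim$ hides a positive constant independent of $N$, $\epsilon$, $f$ and the corruption. *)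

theory Defs
  imports "HOL-Probability.Probability"
begin

definition L2dist :: "'a measure \<Rightarrow> ('a \<Rightarrow> real) \<Rightarrow> ('a \<Rightarrow> real) \<Rightarrow> real" where
  "L2dist \<mu> f g = sqrt (integral\<^sup>L \<mu> (\<lambda>x. (f x - g x)^2))"

definition L2ball :: "'a measure \<Rightarrow> ('a \<Rightarrow> real) \<Rightarrow> real \<Rightarrow> ('a \<Rightarrow> real) set" where
  "L2ball \<mu> q r = {g. L2dist \<mu> q g \<le> r}"

definition dens_class :: "'a measure \<Rightarrow> 'a set \<Rightarrow> real \<Rightarrow> real \<Rightarrow> ('a \<Rightarrow> real) set" where
  "dens_class \<mu> B \<alpha> \<beta> = {f. f \<in> borel_measurable \<mu> \<and> (\<forall>x\<in>B. \<alpha> \<le> f x \<and> f x \<le> \<beta>)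
                          \<and> integral\<^sup>L \<mu> f = 1}"

definition star_shaped :: "('a \<Rightarrow> real) set \<Rightarrow> bool" where
  "star_shaped F \<longleftrightarrow> (\<exists>f0\<in>F. \<forall>f\<in>F. \<forall>t::real. 0 \<le> t \<and> t \<le> 1 \<longrightarrow>
                          (\<lambda>x. t * f x + (1 - t) * f0 x) \<in> F)"

definition L2diam :: "'a measure \<Rightarrow> ('a \<Rightarrow> real) set \<Rightarrow> real" where
  "L2diam \<mu> F = (SUP p\<in>F \<times> F. L2dist \<mu> (fst p) (snd p))"

definition is_packing :: "'a measure \<Rightarrow> real \<Rightarrow> ('a \<Rightarrow> real) set \<Rightarrow> ('a \<Rightarrow> real) set \<Rightarrow> bool" where
  "is_packing \<mu> \<eta> S P \<longleftrightarrow> P \<subseteq> S \<and> (\<forall>u\<in>P. \<forall>v\<in>P. u \<noteq> v \<longrightarrow> L2dist \<mu> u v > \<eta>)"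

definition maximal_packing :: "'a measure \<Rightarrow> real \<Rightarrow> ('a \<Rightarrow> real) set \<Rightarrow> ('a \<Rightarrow> real) set \<Rightarrow> bool" where
  "maximal_packing \<mu> \<eta> S P \<longleftrightarrow> is_packing \<mu> \<eta> S P \<and>
      (\<forall>Q. is_packing \<mu> \<eta> S Q \<and> P \<subseteq> Q \<longrightarrow> Q = P)"

definition packing_number :: "'a measure \<Rightarrow> real \<Rightarrow> ('a \<Rightarrow> real) set \<Rightarrow> enat" where
  "packing_number \<mu> \<eta> S = (SUP P\<in>{P. is_packing \<mu> \<eta> S P \<and> finite P}. enat (card P))"

definition loc_entropy :: "'a measure \<Rightarrow> ('a \<Rightarrow> real) set \<Rightarrow> real \<Rightarrow> real \<Rightarrow> enat" where
  "loc_entropy \<mu> F \<tau> c' = (SUP g\<in>F. packing_number \<mu> (\<tau> / c') (F \<inter> L2ball \<mu> g \<tau>))"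

definition hfun :: "real \<Rightarrow> real" where
  "hfun \<gamma> = (if \<gamma> = 1 then 1/2 else (\<gamma> - 1 - ln \<gamma>) / (\<gamma> - 1)^2)"

definition cab :: "real \<Rightarrow> real \<Rightarrow> real" where
  "cab \<alpha> \<beta> = hfun (\<beta> / \<alpha>) / \<beta>"

definition Kab :: "real \<Rightarrow> real \<Rightarrow> real" where
  "Kab \<alpha> \<beta> = \<beta> / (\<alpha>^2 * cab \<alpha> \<beta>)"

definition Lfun :: "real \<Rightarrow> real \<Rightarrow> real \<Rightarrow> real" where
  "Lfun \<alpha> \<beta> C = (sqrt (cab \<alpha> \<beta>) * (C - 1) - sqrt (1/\<alpha>))^2
                   / (2 * (2 * Kab \<alpha> \<beta> + 2/3 * ln (\<beta> / \<alpha>)))"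

definition C10 :: "real \<Rightarrow> real \<Rightarrow> real \<Rightarrow> real \<Rightarrow> real" where
  "C10 \<alpha> \<beta> C \<phi> = Lfun \<alpha> \<beta> C / 4 * (1/2 - \<phi>/3)"

definition tauJ :: "real \<Rightarrow> real \<Rightarrow> real \<Rightarrow> nat \<Rightarrow> real" where
  "tauJ C10' C d J = sqrt C10' * d / (2^(J - 1) * (C + 1))"

definition Jcond :: "'a measure \<Rightarrow> ('a \<Rightarrow> real) set \<Rightarrow> real \<Rightarrow> real \<Rightarrow> real \<Rightarrow> real \<Rightarrow> nat \<Rightarrow> nat \<Rightarrow> bool" where
  "Jcond \<mu> F C10' C c d N J \<longleftrightarrow>
     (let \<tau> = tauJ C10' C d J; M = loc_entropy \<mu> F (\<tau> * c / sqrt C10') (2 * c) in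
      M \<noteq> \<infinity> \<and> real N * \<tau>^2 > max (2 * ln ((real (the_enat M))^2)) (ln 2))"

text \<open>psi(g,g',X) = 1, with groups G 0, ..., G (N div k - 1) partitioning the indices {..<N}.\<close>
definition psi :: "nat \<Rightarrow> nat \<Rightarrow> (nat \<Rightarrow> nat set) \<Rightarrow> (nat \<Rightarrow> 'a) \<Rightarrow> ('a \<Rightarrow> real) \<Rightarrow> ('a \<Rightarrow> real) \<Rightarrow> bool" where
  "psi N k G X g g' \<longleftrightarrow>
     real (card {j \<in> {..<N div k}. (\<Sum>i\<in>G j. ln (g (X i) / g' (X i))) > 0}) \<ge> real N / (2 * real k)"

definition prec :: "nat \<Rightarrow> nat \<Rightarrow> (nat \<Rightarrow> nat set) \<Rightarrow> (nat \<Rightarrow> 'a) \<Rightarrow> ('a \<Rightarrow> real) \<Rightarrow> ('a \<Rightarrow> real) \<Rightarrow> bool" where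
  "prec N k G X g' g \<longleftrightarrow> psi N k G X g g'"

definition Tval :: "'a measure \<Rightarrow> nat \<Rightarrow> nat \<Rightarrow> (nat \<Rightarrow> nat set) \<Rightarrow> (nat \<Rightarrow> 'a) \<Rightarrow> real \<Rightarrow> real
                    \<Rightarrow> ('a \<Rightarrow> real) set \<Rightarrow> ('a \<Rightarrow> real) \<Rightarrow> real" where
  "Tval \<mu> N k G X C \<delta> U u =
     Max ({L2dist \<mu> u v | v. v \<in> U \<and> prec N k G X u v \<and> L2dist \<mu> u v \<ge> C * \<delta>} \<union> {0})"

definition selected :: "'a measure \<Rightarrow> nat \<Rightarrow> nat \<Rightarrow> (nat \<Rightarrow> nat set) \<Rightarrow> (nat \<Rightarrow> 'a) \<Rightarrow> real \<Rightarrow> real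
                    \<Rightarrow> ('a \<Rightarrow> real) set \<Rightarrow> ('a \<Rightarrow> real) \<Rightarrow> bool" where
  "selected \<mu> N k G X C \<delta> U u \<longleftrightarrow> u \<in> U \<and> (\<forall>v\<in>U. Tval \<mu> N k G X C \<delta> U u \<le> Tval \<mu> N k G X C \<delta> U v)"

text \<open>Merging pass over the ordered list of (parent, candidate) pairs: the first listed candidate
  absorbs all other listed candidates within distance eta; the result lists (parent, offspring).\<close>
function merge_cands :: "'a measure \<Rightarrow> real \<Rightarrow> (('a \<Rightarrow> real) \<times> ('a \<Rightarrow> real)) list
                          \<Rightarrow> (('a \<Rightarrow> real) \<times> ('a \<Rightarrow> real)) list" where
  "merge_cands \<mu> \<eta> [] = []"
| "merge_cands \<mu> \<eta> ((q, u) # rest) =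
     (q, u) # map (\<lambda>p. (fst p, u)) (filter (\<lambda>p. L2dist \<mu> u (snd p) \<le> \<eta>) rest)
     @ merge_cands \<mu> \<eta> (filter (\<lambda>p. \<not> L2dist \<mu> u (snd p) \<le> \<eta>) rest)"
  by pat_completeness auto
termination
  by (relation "Wellfounded.measure (\<lambda>(_, _, xs). length xs)") (auto simp: le_imp_less_Suc)

definition valid_tree :: "'a measure \<Rightarrow> ('a \<Rightarrow> real) set \<Rightarrow> real \<Rightarrow> real \<Rightarrow> ('a \<Rightarrow> real) \<Rightarrow> nat
      \<Rightarrow> (nat \<Rightarrow> ('a \<Rightarrow> real) set) \<Rightarrow> (nat \<Rightarrow> ('a \<Rightarrow> real) \<Rightarrow> ('a \<Rightarrow> real) set) \<Rightarrow> bool" where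
  "valid_tree \<mu> F d c \<nu>1 Jt Lv off \<longleftrightarrow>
     \<nu>1 \<in> F \<and> Lv 1 = {\<nu>1} \<and>
     (2 \<le> Jt \<longrightarrow> maximal_packing \<mu> (d / c) F (off 2 \<nu>1) \<and> Lv 2 = off 2 \<nu>1) \<and>
     (\<forall>j. 3 \<le> j \<and> j \<le> Jt \<longrightarrow>
        (\<exists>P cs. (\<forall>q\<in>Lv (j - 1). maximal_packing \<mu> (d / (2^(j - 1) * c))
                                   (L2ball \<mu> q (d / 2^(j - 2)) \<inter> F) (P q))
              \<and> distinct cs \<and> set cs = {(q, u). q \<in> Lv (j - 1) \<and> u \<in> P q}
              \<and> (\<forall>q\<in>Lv (j - 1). off j q = {u. (q, u) \<in> set (merge_cands \<mu> (d / (2^(j - 1) * c)) cs)})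
              \<and> Lv j = (\<Union>q\<in>Lv (j - 1). off j q)))"

definition estimator_path :: "'a measure \<Rightarrow> nat \<Rightarrow> nat \<Rightarrow> (nat \<Rightarrow> nat set) \<Rightarrow> real \<Rightarrow> real \<Rightarrow> real
      \<Rightarrow> nat \<Rightarrow> ('a \<Rightarrow> real) \<Rightarrow> (nat \<Rightarrow> ('a \<Rightarrow> real) \<Rightarrow> ('a \<Rightarrow> real) set) \<Rightarrow> (nat \<Rightarrow> 'a)
      \<Rightarrow> (nat \<Rightarrow> ('a \<Rightarrow> real)) \<Rightarrow> bool" where
  "estimator_path \<mu> N k G C c d Jt \<nu>1 off X \<nu> \<longleftrightarrow>
     \<nu> 1 = \<nu>1 \<and>
     (\<forall>j. 2 \<le> j \<and> j \<le> Jt \<longrightarrow>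
        selected \<mu> N k G X C (d / (2^(j - 2) * c)) (off j (\<nu> (j - 1))) (\<nu> j))"

definition outer_exp :: "'b measure \<Rightarrow> ('b \<Rightarrow> real) \<Rightarrow> ennreal" where
  "outer_exp M h = (INF g\<in>{g \<in> borel_measurable M. \<forall>x\<in>space M. ennreal (h x) \<le> g x}. nn_integral M g)"

end

theory Submission
  imports Defs
begin

text \<open>
  The estimator walks down the tree, halving the scale at every level. At level \<open>j\<close> the selection
  rule keeps the path within \<open>d / 2^(j-1)\<close> of \<open>f\<close> unless some offspring \<open>v\<close> far from an
  offspring \<open>u\<close> close to \<open>f\<close> fails to lose against \<open>u\<close> in a strict majority of the groups.
  Corruption reaches at most a third of the groups, so such a failure makes at least a sixth of the
  clean groups favour \<open>v\<close>. The product of \<open>sqrt (v / u)\<close> over the observations of those groups is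
  then at least \<open>1\<close>, while its expectation is a power of the Hellinger affinity of \<open>u\<close> and \<open>v\<close>
  under \<open>f\<close>, at most \<open>exp (- \<parallel>u - v\<parallel>\<^sup>2 / (16 \<beta>))\<close> per observation. As long as the scale stays
  above the corruption level this beats both the \<open>2^m\<close> choices among the \<open>m = N / k\<close> groups
  and the \<open>M\<^sup>2\<close> pairs \<open>(u, v)\<close>, where \<open>M\<close> bounds the local entropy. Weighting each failure
  probability by the squared distance it costs gives a geometric series dominated by
  \<open>max (\<tau>\<^sup>2, \<epsilon>)\<close>, and \<open>d\<^sup>2\<close> bounds the risk trivially.
\<close>

section \<open>Bounded functions and the \<open>L\<^sub>2\<close> distance\<close>

definition bounded_measurable :: "'a measure \<Rightarrow> ('a \<Rightarrow> real) \<Rightarrow> bool" where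
  "bounded_measurable M h \<longleftrightarrow> h \<in> borel_measurable M \<and> (\<exists>K. \<forall>x\<in>space M. \<bar>h x\<bar> \<le> K)"

lemma bounded_measurable_diff:
  "bounded_measurable M f \<Longrightarrow> bounded_measurable M g \<Longrightarrow> bounded_measurable M (\<lambda>x. f x - g x)"
  unfolding bounded_measurable_def
proof (elim conjE exE, intro conjI)
  fix K L assume "\<forall>x\<in>space M. \<bar>f x\<bar> \<le> K" "\<forall>x\<in>space M. \<bar>g x\<bar> \<le> L"
  then show "\<exists>K. \<forall>x\<in>space M. \<bar>f x - g x\<bar> \<le> K" by (intro exI[of _ "K + L"]) force
qed auto

lemma bounded_measurable_mult:
  "bounded_measurable M f \<Longrightarrow> bounded_measurable M g \<Longrightarrow> bounded_measurable M (\<lambda>x. f x * g x)"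
  unfolding bounded_measurable_def
proof (elim conjE exE, intro conjI)
  fix K L assume "\<forall>x\<in>space M. \<bar>f x\<bar> \<le> K" "\<forall>x\<in>space M. \<bar>g x\<bar> \<le> L"
  then show "\<exists>K. \<forall>x\<in>space M. \<bar>f x * g x\<bar> \<le> K"
    by (intro exI[of _ "K * L"]) (auto simp: abs_mult intro: mult_mono')
qed auto

lemma bounded_measurable_power2:
  "bounded_measurable M f \<Longrightarrow> bounded_measurable M (\<lambda>x. (f x)\<^sup>2)"
  using bounded_measurable_mult[of M f f] by (simp add: power2_eq_square)

lemma (in finite_measure) integrable_bounded_measurable:
  assumes "bounded_measurable M h"
  shows "integrable M h"
proof -
  obtain K where "\<forall>x\<in>space M. \<bar>h x\<bar> \<le> K" "h \<in> borel_measurable M"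
    using assms unfolding bounded_measurable_def by auto
  then show ?thesis by (intro integrable_const_bound[where B = K]) auto
qed

lemma (in finite_measure) integral_mult_le_sqrt:
  assumes a: "bounded_measurable M a" and b: "bounded_measurable M b"
  shows "(\<integral>x. a x * b x \<partial>M) \<le> sqrt (\<integral>x. (a x)\<^sup>2 \<partial>M) * sqrt (\<integral>x. (b x)\<^sup>2 \<partial>M)"
proof -
  have [measurable]: "a \<in> borel_measurable M" "b \<in> borel_measurable M"
    using a b unfolding bounded_measurable_def by auto
  have ennreal_L2: "(\<integral>\<^sup>+x. ennreal \<bar>h x\<bar> ^ 2 \<partial>M) = ennreal (\<integral>x. (h x)\<^sup>2 \<partial>M)"
    if "bounded_measurable M h" for h
    using integrable_bounded_measurable[OF bounded_measurable_power2[OF that]]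
    by (subst nn_integral_eq_integral[symmetric]) (auto simp: ennreal_power)
  define I where "I = (\<integral>x. \<bar>a x\<bar> * \<bar>b x\<bar> \<partial>M)"
  have int_ab: "integrable M (\<lambda>x. a x * b x)"
    by (rule integrable_bounded_measurable[OF bounded_measurable_mult[OF a b]])
  then have int_abs: "integrable M (\<lambda>x. \<bar>a x\<bar> * \<bar>b x\<bar>)"
    by (simp flip: abs_mult)
  have "ennreal I = (\<integral>\<^sup>+x. ennreal \<bar>a x\<bar> * ennreal \<bar>b x\<bar> \<partial>M)"
    unfolding I_def using int_abs
    by (subst nn_integral_eq_integral[symmetric]) (auto simp: ennreal_mult)
  then have "ennreal I ^ 2 \<le> ennreal (\<integral>x. (a x)\<^sup>2 \<partial>M) * ennreal (\<integral>x. (b x)\<^sup>2 \<partial>M)"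
    using Cauchy_Schwarz_nn_integral[of "\<lambda>x. ennreal \<bar>a x\<bar>" M "\<lambda>x. ennreal \<bar>b x\<bar>"]
    by (simp add: ennreal_L2[OF a] ennreal_L2[OF b])
  then have "I\<^sup>2 \<le> (\<integral>x. (a x)\<^sup>2 \<partial>M) * (\<integral>x. (b x)\<^sup>2 \<partial>M)"
    by (simp add: ennreal_power I_def ennreal_mult[symmetric])
  then have "I \<le> sqrt (\<integral>x. (a x)\<^sup>2 \<partial>M) * sqrt (\<integral>x. (b x)\<^sup>2 \<partial>M)"
    by (simp add: real_le_rsqrt flip: real_sqrt_mult)
  moreover have "(\<integral>x. a x * b x \<partial>M) \<le> I"
    unfolding I_def using int_ab int_abs by (intro integral_mono) (auto simp flip: abs_mult)
  ultimately show ?thesis by linarith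
qed

lemma L2dist_commute: "L2dist M f g = L2dist M g f"
  unfolding L2dist_def by (simp add: power2_commute)

lemma L2dist_self [simp]: "L2dist M f f = 0"
  unfolding L2dist_def by simp

lemma L2dist_nonneg: "0 \<le> L2dist M f g"
  unfolding L2dist_def by simp

lemma power2_L2dist: "(L2dist M f g)\<^sup>2 = (\<integral>x. (f x - g x)\<^sup>2 \<partial>M)"
  unfolding L2dist_def by (simp add: integral_nonneg_AE)

lemma (in finite_measure) L2dist_triangle:
  assumes f: "bounded_measurable M f" and g: "bounded_measurable M g" and h: "bounded_measurable M h"
  shows "L2dist M f h \<le> L2dist M f g + L2dist M g h"
proof -
  define a where "a x = f x - g x" for x
  define b where "b x = g x - h x" for x
  have a: "bounded_measurable M a" and b: "bounded_measurable M b"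
    unfolding a_def b_def using f g h by (auto intro: bounded_measurable_diff)
  have "(L2dist M f h)\<^sup>2 = (\<integral>x. (a x)\<^sup>2 + 2 * (a x * b x) + (b x)\<^sup>2 \<partial>M)"
    unfolding power2_L2dist a_def b_def
    by (rule Bochner_Integration.integral_cong) (auto simp: power2_eq_square algebra_simps)
  also have "\<dots> = (\<integral>x. (a x)\<^sup>2 \<partial>M) + 2 * (\<integral>x. a x * b x \<partial>M) + (\<integral>x. (b x)\<^sup>2 \<partial>M)"
    using a b by (simp add: integrable_bounded_measurable bounded_measurable_power2 bounded_measurable_mult)
  also have "\<dots> \<le> (L2dist M f g)\<^sup>2 + 2 * (L2dist M f g * L2dist M g h) + (L2dist M g h)\<^sup>2"
    using integral_mult_le_sqrt[OF a b] unfolding power2_L2dist a_def b_def L2dist_def by simp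
  also have "\<dots> = (L2dist M f g + L2dist M g h)\<^sup>2"
    by (simp add: power2_eq_square algebra_simps)
  finally show ?thesis
    by (meson L2dist_nonneg add_nonneg_nonneg power2_le_imp_le)
qed

lemma dens_class_bounded_measurable:
  assumes "f \<in> dens_class M B \<alpha> \<beta>" "space M = B"
  shows "bounded_measurable M f"
  unfolding bounded_measurable_def
proof (intro conjI exI[of _ "\<bar>\<alpha>\<bar> + \<bar>\<beta>\<bar>"] ballI)
  show "f \<in> borel_measurable M" using assms unfolding dens_class_def by auto
  fix x assume "x \<in> space M"
  then show "\<bar>f x\<bar> \<le> \<bar>\<alpha>\<bar> + \<bar>\<beta>\<bar>" using assms unfolding dens_class_def by force
qed

lemma (in prob_space) L2dist_dens_class_le:
  assumes B: "space M = B" and f: "f \<in> dens_class M B \<alpha> \<beta>" and g: "g \<in> dens_class M B \<alpha> \<beta>"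
  shows "L2dist M f g \<le> \<beta> - \<alpha>"
proof -
  have range: "\<alpha> \<le> f x" "f x \<le> \<beta>" "\<alpha> \<le> g x" "g x \<le> \<beta>" if "x \<in> space M" for x
    using that f g B unfolding dens_class_def by auto
  have bound: "(f x - g x)\<^sup>2 \<le> (\<beta> - \<alpha>)\<^sup>2" if "x \<in> space M" for x
    using range[OF that] by (intro abs_le_square_iff[THEN iffD1]) auto
  have "integrable M (\<lambda>x. (f x - g x)\<^sup>2)"
    using f g B by (intro integrable_bounded_measurable bounded_measurable_power2
        bounded_measurable_diff dens_class_bounded_measurable)
  then have "(L2dist M f g)\<^sup>2 \<le> (\<integral>x. (\<beta> - \<alpha>)\<^sup>2 \<partial>M)"
    unfolding power2_L2dist using bound by (intro integral_mono) auto
  then have "(L2dist M f g)\<^sup>2 \<le> (\<beta> - \<alpha>)\<^sup>2" by (simp add: prob_space)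
  moreover obtain x where "x \<in> space M" using not_empty by blast
  ultimately show ?thesis using range[of x]
    by (auto intro: power2_le_imp_le[OF _ diff_ge_0_iff_ge[THEN iffD2]])
qed

lemma (in prob_space) L2dist_le_L2diam:
  assumes "space M = B" "F \<subseteq> dens_class M B \<alpha> \<beta>" "f \<in> F" "g \<in> F"
  shows "L2dist M f g \<le> L2diam M F"
proof -
  have "bdd_above ((\<lambda>p. L2dist M (fst p) (snd p)) ` (F \<times> F))"
  proof (rule bdd_aboveI)
    fix y assume "y \<in> (\<lambda>p. L2dist M (fst p) (snd p)) ` (F \<times> F)"
    then obtain u v where "u \<in> F" "v \<in> F" "y = L2dist M u v" by auto
    then show "y \<le> \<beta> - \<alpha>" using L2dist_dens_class_le[OF assms(1), of u \<alpha> \<beta> v] assms(2) by auto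
  qed
  then have "(\<lambda>p. L2dist M (fst p) (snd p)) (f, g) \<le> L2diam M F"
    unfolding L2diam_def using assms(3,4) by (intro cSUP_upper) auto
  then show ?thesis by simp
qed

section \<open>Packings and local entropy\<close>

lemma maximal_packing_subset: "maximal_packing M \<eta> S P \<Longrightarrow> P \<subseteq> S"
  unfolding maximal_packing_def is_packing_def by blast

lemma maximal_packing_covers:
  assumes P: "maximal_packing M \<eta> S P" and s: "s \<in> S" and "0 \<le> \<eta>"
  shows "\<exists>p\<in>P. L2dist M p s \<le> \<eta>"
proof (rule ccontr)
  assume "\<not> ?thesis"
  then have far: "\<forall>p\<in>P. \<eta> < L2dist M p s" by auto
  then have "s \<notin> P" using \<open>0 \<le> \<eta>\<close> by force
  moreover have "is_packing M \<eta> S (insert s P)"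
    using P far s unfolding maximal_packing_def is_packing_def by (auto simp: L2dist_commute)
  ultimately show False using P unfolding maximal_packing_def by blast
qed

lemma is_packing_mono:
  "is_packing M \<eta> S P \<Longrightarrow> Q \<subseteq> P \<Longrightarrow> Q \<subseteq> S' \<Longrightarrow> \<eta>' \<le> \<eta> \<Longrightarrow> is_packing M \<eta>' S' Q"
  unfolding is_packing_def by (meson order_le_less_trans subset_iff)

lemma packing_card_le_loc_entropy:
  assumes g: "g \<in> F" and P: "is_packing M (\<tau> / c') (F \<inter> L2ball M g \<tau>) P"
    and fin: "loc_entropy M F \<tau> c' \<noteq> \<infinity>"
  shows "finite P" "card P \<le> the_enat (loc_entropy M F \<tau> c')"
proof -
  have le: "enat (card Q) \<le> loc_entropy M F \<tau> c'" if "Q \<subseteq> P" "finite Q" for Q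
  proof -
    have "P \<subseteq> F \<inter> L2ball M g \<tau>" using P unfolding is_packing_def by simp
    then have "is_packing M (\<tau> / c') (F \<inter> L2ball M g \<tau>) Q"
      using \<open>Q \<subseteq> P\<close> by (intro is_packing_mono[OF P \<open>Q \<subseteq> P\<close>]) auto
    then have "enat (card Q) \<le> packing_number M (\<tau> / c') (F \<inter> L2ball M g \<tau>)"
      unfolding packing_number_def using that by (intro SUP_upper) auto
    also have "\<dots> \<le> loc_entropy M F \<tau> c'"
      unfolding loc_entropy_def using g by (intro SUP_upper) auto
    finally show ?thesis .
  qed
  obtain n where n: "loc_entropy M F \<tau> c' = enat n" using fin by auto
  show "finite P"
  proof (rule ccontr)
    assume "infinite P"
    then obtain Q where "Q \<subseteq> P" "finite Q" "card Q = Suc n"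
      using infinite_arbitrarily_large by blast
    then show False using le[of Q] n by simp
  qed
  then show "card P \<le> the_enat (loc_entropy M F \<tau> c')" using le[of P] n by simp
qed

lemma L2dist_convex_combination:
  assumes "0 \<le> t"
  shows "L2dist M (\<lambda>x. t * u x + (1 - t) * w x) (\<lambda>x. t * v x + (1 - t) * w x) = t * L2dist M u v"
proof -
  have "(\<lambda>x. (t * u x + (1 - t) * w x - (t * v x + (1 - t) * w x))\<^sup>2) = (\<lambda>x. t\<^sup>2 * (u x - v x)\<^sup>2)"
    by (auto simp: power2_eq_square algebra_simps)
  then show ?thesis unfolding L2dist_def using assms by (simp add: real_sqrt_mult)
qed

lemma packing_contract_towards_centre:
  fixes t :: real and f0 :: "'a \<Rightarrow> real"
  defines "T \<equiv> \<lambda>h x. t * h x + (1 - t) * f0 x"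
  assumes t: "0 < t" and "0 < \<eta>" and TF: "\<forall>h\<in>F. T h \<in> F"
    and P: "is_packing M \<eta> (F \<inter> L2ball M g \<tau>) P"
  shows "is_packing M (t * \<eta>) (F \<inter> L2ball M (T g) (t * \<tau>)) (T ` P)" "inj_on T P"
proof -
  have dist_T: "L2dist M (T u) (T v) = t * L2dist M u v" for u v
    unfolding T_def using t by (intro L2dist_convex_combination) simp
  have sep: "t * \<eta> < L2dist M (T u) (T v)" if "u \<in> P" "v \<in> P" "u \<noteq> v" for u v
    using that P t unfolding dist_T is_packing_def by auto
  show "inj_on T P"
  proof (rule inj_onI, rule ccontr)
    fix u v assume "u \<in> P" "v \<in> P" "T u = T v" "u \<noteq> v"
    then show False using sep[of u v] mult_pos_pos[OF t \<open>0 < \<eta>\<close>] by simp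
  qed
  show "is_packing M (t * \<eta>) (F \<inter> L2ball M (T g) (t * \<tau>)) (T ` P)"
    using P TF t sep unfolding is_packing_def L2ball_def by (auto simp: dist_T intro: mult_left_mono)
qed

lemma loc_entropy_antimono:
  assumes "star_shaped F" and "0 < \<tau>'" "\<tau>' \<le> \<tau>" and "0 < c'"
  shows "loc_entropy M F \<tau> c' \<le> loc_entropy M F \<tau>' c'"
proof -
  obtain f0 where star: "\<forall>f\<in>F. \<forall>t::real. 0 \<le> t \<and> t \<le> 1 \<longrightarrow> (\<lambda>x. t * f x + (1 - t) * f0 x) \<in> F"
    using assms(1) unfolding star_shaped_def by blast
  define t where "t = \<tau>' / \<tau>"
  define T where "T = (\<lambda>h x. t * h x + (1 - t) * f0 x)"
  have t: "0 < t" "t \<le> 1" "t * \<tau> = \<tau>'" "t * (\<tau> / c') = \<tau>' / c'"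
    using assms unfolding t_def by auto
  have TF: "\<forall>h\<in>F. T h \<in> F" using star t unfolding T_def by auto
  show ?thesis
    unfolding loc_entropy_def[of _ _ \<tau>] packing_number_def
  proof (intro SUP_least, clarify)
    fix g P assume g: "g \<in> F" and P: "is_packing M (\<tau> / c') (F \<inter> L2ball M g \<tau>) P" "finite P"
    note contract = packing_contract_towards_centre[OF t(1) _ TF[unfolded T_def] P(1)]
    have "enat (card P) = enat (card (T ` P))"
      using contract(2) assms(2,3,4) by (simp add: T_def card_image)
    also have "\<dots> \<le> packing_number M (\<tau>' / c') (F \<inter> L2ball M (T g) \<tau>')"
      unfolding packing_number_def using contract(1) assms(2,3,4) P(2) t
      by (intro SUP_upper) (auto simp: T_def)
    also have "\<dots> \<le> loc_entropy M F \<tau>' c'"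
      unfolding loc_entropy_def using TF g by (intro SUP_upper) auto
    finally show "enat (card P) \<le> loc_entropy M F \<tau>' c'" .
  qed
qed

section \<open>The multiscale tree\<close>

lemma mset_map_fst_merge_cands: "mset (map fst (merge_cands M \<eta> xs)) = mset (map fst xs)"
proof (induction M \<eta> xs rule: merge_cands.induct)
  case (2 M \<eta> q u rest)
  have "mset (map fst rest) = mset (map fst (filter (\<lambda>p. L2dist M u (snd p) \<le> \<eta>) rest))
        + mset (map fst (filter (\<lambda>p. \<not> L2dist M u (snd p) \<le> \<eta>) rest))"
    by (induction rest) auto
  then show ?case using 2 by (simp add: o_def)
qed simp

lemma snd_merge_cands_subset: "snd ` set (merge_cands M \<eta> xs) \<subseteq> snd ` set xs"
  by (induction M \<eta> xs rule: merge_cands.induct) (auto simp: image_iff)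

lemma merge_cands_absorbs:
  assumes "p \<in> set xs" "0 \<le> \<eta>"
  shows "\<exists>u. (fst p, u) \<in> set (merge_cands M \<eta> xs) \<and> L2dist M u (snd p) \<le> \<eta>"
  using assms
proof (induction M \<eta> xs rule: merge_cands.induct)
  case (2 M \<eta> q u rest)
  consider "p = (q, u)" | "p \<in> set rest" "L2dist M u (snd p) \<le> \<eta>"
    | "p \<in> set (filter (\<lambda>p. \<not> L2dist M u (snd p) \<le> \<eta>) rest)"
    using "2.prems"(1) by auto
  then show ?case
  proof cases
    case 2
    then have "(fst p, u) \<in> set (merge_cands M \<eta> ((q, u) # rest))" by force
    then show ?thesis using 2 by blast
  next
    case 3
    from "2.IH"[OF this "2.prems"(2)] show ?thesis by auto
  qed (use "2.prems"(2) in auto)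
qed simp

lemma merge_cands_near_input:
  assumes "p \<in> set (merge_cands M \<eta> xs)" "0 \<le> \<eta>"
  shows "\<exists>p'\<in>set xs. fst p' = fst p \<and> L2dist M (snd p) (snd p') \<le> \<eta>"
  using assms
proof (induction M \<eta> xs rule: merge_cands.induct)
  case (2 M \<eta> q u rest)
  consider "p = (q, u)" | p' where "p' \<in> set rest" "L2dist M u (snd p') \<le> \<eta>" "p = (fst p', u)"
    | "p \<in> set (merge_cands M \<eta> (filter (\<lambda>p. \<not> L2dist M u (snd p) \<le> \<eta>) rest))"
    using "2.prems"(1) by auto
  then show ?case
  proof cases
    case 1
    then show ?thesis using "2.prems"(2) by (intro bexI[of _ "(q, u)"]) auto
  next
    case (2 p')
    then show ?thesis by (intro bexI[of _ p']) auto
  next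
    case 3
    from "2.IH"[OF this "2.prems"(2)] obtain p' where
      "p' \<in> set rest" "fst p' = fst p" "L2dist M (snd p) (snd p') \<le> \<eta>" by auto
    then show ?thesis by (intro bexI[of _ p']) auto
  qed
qed simp

lemma merge_cands_separated:
  assumes "p1 \<in> set (merge_cands M \<eta> xs)" "p2 \<in> set (merge_cands M \<eta> xs)" "snd p1 \<noteq> snd p2"
  shows "\<eta> < L2dist M (snd p1) (snd p2)"
  using assms
proof (induction M \<eta> xs arbitrary: p1 p2 rule: merge_cands.induct)
  case (2 M \<eta> q u rest)
  define far where "far = filter (\<lambda>p. \<not> L2dist M u (snd p) \<le> \<eta>) rest"
  have cases: "snd p = u \<or> p \<in> set (merge_cands M \<eta> far)"
    if "p \<in> set (merge_cands M \<eta> ((q, u) # rest))" for p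
    using that unfolding far_def by auto
  have far_from_u: "\<eta> < L2dist M u (snd p)" if "p \<in> set (merge_cands M \<eta> far)" for p
    using that snd_merge_cands_subset[of M \<eta> far] unfolding far_def by auto
  from cases[OF "2.prems"(1)] cases[OF "2.prems"(2)] show ?case
  proof (elim disjE)
    assume "snd p1 = u" "snd p2 = u"
    then show ?thesis using "2.prems"(3) by simp
  next
    assume "snd p1 = u" "p2 \<in> set (merge_cands M \<eta> far)"
    then show ?thesis using far_from_u by simp
  next
    assume "p1 \<in> set (merge_cands M \<eta> far)" "snd p2 = u"
    then show ?thesis using far_from_u[of p1] by (simp add: L2dist_commute)
  next
    assume "p1 \<in> set (merge_cands M \<eta> far)" "p2 \<in> set (merge_cands M \<eta> far)"
    then show ?thesis using "2.IH"[of p1 p2] "2.prems"(3) unfolding far_def by simp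
  qed
qed simp

lemma card_merge_cands_offspring_le:
  "card {u. (q, u) \<in> set (merge_cands M \<eta> xs)} \<le> length (filter (\<lambda>p. fst p = q) xs)"
proof -
  define ys where "ys = merge_cands M \<eta> xs"
  have "{u. (q, u) \<in> set ys} = snd ` set (filter (\<lambda>p. fst p = q) ys)" by force
  then have "card {u. (q, u) \<in> set ys} \<le> card (set (filter (\<lambda>p. fst p = q) ys))"
    by (simp add: card_image_le)
  also have "\<dots> \<le> length (filter (\<lambda>p. fst p = q) ys)" by (rule card_length)
  also have "\<dots> = count (mset (map fst ys)) q" by (induction ys) auto
  also have "\<dots> = count (mset (map fst xs)) q" unfolding ys_def mset_map_fst_merge_cands ..
  also have "\<dots> = length (filter (\<lambda>p. fst p = q) xs)" by (induction xs) auto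
  finally show ?thesis unfolding ys_def .
qed

lemma power_pred_eq: "2 \<le> j \<Longrightarrow> (x::'a::monoid_mult) ^ (j - 1) = x * x ^ (j - 2)"
  by (cases j; cases "j - 1") auto

lemma power2_two_pow: "((2::real) ^ n)\<^sup>2 = 4 ^ n"
proof -
  have "(2::real) ^ n * 2 ^ n = 4 ^ n" by (simp flip: power_mult_distrib)
  then show ?thesis by (simp add: power2_eq_square)
qed

lemma estimator_path_selected:
  assumes "estimator_path \<mu> N k G C c d Jt \<nu>1 off X \<nu>" "2 \<le> j" "j \<le> Jt"
  shows "selected \<mu> N k G X C (d / (2^(j - 2) * c)) (off j (\<nu> (j - 1))) (\<nu> j)"
  using assms unfolding estimator_path_def by blast

text \<open>The offspring of \<open>q\<close> that the analysis compares against: one within \<open>\<delta>_j = d / (2^(j-2) c)\<close>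
  of \<open>f\<close>. It exists when \<open>q\<close> is within \<open>d / 2^(j-2)\<close> of \<open>f\<close> (\<open>offspring_covers\<close>); otherwise
  \<open>SOME\<close> returns junk.\<close>

definition near_offspring ::
  "'a measure \<Rightarrow> (nat \<Rightarrow> ('a \<Rightarrow> real) \<Rightarrow> ('a \<Rightarrow> real) set) \<Rightarrow> real \<Rightarrow> real \<Rightarrow> ('a \<Rightarrow> real)
    \<Rightarrow> nat \<Rightarrow> ('a \<Rightarrow> real) \<Rightarrow> ('a \<Rightarrow> real)" where
  "near_offspring \<mu> off d c f j q = (SOME u. u \<in> off j q \<and> L2dist \<mu> u f \<le> d / (2^(j - 2) * c))"

locale multiscale_tree = prob_space \<mu> for \<mu> :: "'a measure" +
  fixes F :: "('a \<Rightarrow> real) set" and B :: "'a set" and \<alpha> \<beta> d c :: real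
    and \<nu>1 :: "'a \<Rightarrow> real" and Jt :: nat
    and Lv :: "nat \<Rightarrow> ('a \<Rightarrow> real) set" and off :: "nat \<Rightarrow> ('a \<Rightarrow> real) \<Rightarrow> ('a \<Rightarrow> real) set"
  assumes space_eq: "space \<mu> = B" and F_dens: "F \<subseteq> dens_class \<mu> B \<alpha> \<beta>"
    and diam_eq: "d = L2diam \<mu> F" and c_pos: "0 < c"
    and tree: "valid_tree \<mu> F d c \<nu>1 Jt Lv off"
begin

lemma L2dist_le_diam: "g \<in> F \<Longrightarrow> h \<in> F \<Longrightarrow> L2dist \<mu> g h \<le> d"
  using L2dist_le_L2diam[OF space_eq F_dens] diam_eq by blast

lemma triangle: "f \<in> F \<Longrightarrow> g \<in> F \<Longrightarrow> h \<in> F \<Longrightarrow> L2dist \<mu> f h \<le> L2dist \<mu> f g + L2dist \<mu> g h"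
  using F_dens space_eq by (intro L2dist_triangle dens_class_bounded_measurable) auto

lemma root: "\<nu>1 \<in> F" "Lv 1 = {\<nu>1}"
  using tree unfolding valid_tree_def by auto

lemma diam_nonneg: "0 \<le> d"
  using L2dist_le_diam[OF root(1) root(1)] by simp

lemma level2: "2 \<le> Jt \<Longrightarrow> maximal_packing \<mu> (d / c) F (off 2 \<nu>1) \<and> Lv 2 = off 2 \<nu>1"
  using tree unfolding valid_tree_def by auto

text \<open>\<open>valid_tree\<close> only asserts that suitable packings and candidate lists exist at each level;
  we fix one choice.\<close>

definition level_data ::
  "nat \<Rightarrow> (('a \<Rightarrow> real) \<Rightarrow> ('a \<Rightarrow> real) set) \<times> (('a \<Rightarrow> real) \<times> ('a \<Rightarrow> real)) list" where
  "level_data j = (SOME (P, cs).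
     (\<forall>q\<in>Lv (j - 1). maximal_packing \<mu> (d / (2^(j - 1) * c)) (L2ball \<mu> q (d / 2^(j - 2)) \<inter> F) (P q)) \<and>
     distinct cs \<and> set cs = {(q, u). q \<in> Lv (j - 1) \<and> u \<in> P q} \<and>
     (\<forall>q\<in>Lv (j - 1). off j q = {u. (q, u) \<in> set (merge_cands \<mu> (d / (2^(j - 1) * c)) cs)}) \<and>
     Lv j = (\<Union>q\<in>Lv (j - 1). off j q))"

abbreviation "packing j \<equiv> fst (level_data j)"
abbreviation "candidates j \<equiv> snd (level_data j)"

lemma level_data:
  assumes "3 \<le> j" "j \<le> Jt"
  shows "(\<forall>q\<in>Lv (j - 1). maximal_packing \<mu> (d / (2^(j - 1) * c)) (L2ball \<mu> q (d / 2^(j - 2)) \<inter> F) (packing j q)) \<and>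
    distinct (candidates j) \<and> set (candidates j) = {(q, u). q \<in> Lv (j - 1) \<and> u \<in> packing j q} \<and>
    (\<forall>q\<in>Lv (j - 1). off j q = {u. (q, u) \<in> set (merge_cands \<mu> (d / (2^(j - 1) * c)) (candidates j))}) \<and>
    Lv j = (\<Union>q\<in>Lv (j - 1). off j q)"
  unfolding level_data_def
  by (rule someI2_ex) (use tree assms in \<open>auto simp: valid_tree_def\<close>)

lemma packing_maximal:
  "3 \<le> j \<Longrightarrow> j \<le> Jt \<Longrightarrow> q \<in> Lv (j - 1) \<Longrightarrow>
    maximal_packing \<mu> (d / (2^(j - 1) * c)) (L2ball \<mu> q (d / 2^(j - 2)) \<inter> F) (packing j q)"
  using level_data by blast

lemma distinct_candidates: "3 \<le> j \<Longrightarrow> j \<le> Jt \<Longrightarrow> distinct (candidates j)"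
  using level_data by blast

lemma set_candidates:
  "3 \<le> j \<Longrightarrow> j \<le> Jt \<Longrightarrow> set (candidates j) = {(q, u). q \<in> Lv (j - 1) \<and> u \<in> packing j q}"
  using level_data by blast

lemma offspring_eq:
  "3 \<le> j \<Longrightarrow> j \<le> Jt \<Longrightarrow> q \<in> Lv (j - 1) \<Longrightarrow>
    off j q = {u. (q, u) \<in> set (merge_cands \<mu> (d / (2^(j - 1) * c)) (candidates j))}"
  using level_data by blast

lemma level_eq: "3 \<le> j \<Longrightarrow> j \<le> Jt \<Longrightarrow> Lv j = (\<Union>q\<in>Lv (j - 1). off j q)"
  using level_data by blast

lemma offspring_subset_F:
  assumes j: "2 \<le> j" "j \<le> Jt" and q: "q \<in> Lv (j - 1)"
  shows "off j q \<subseteq> F"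
proof (cases "j = 2")
  case True
  then show ?thesis using level2 j q root unfolding maximal_packing_def is_packing_def by auto
next
  case False
  with j have j3: "3 \<le> j" by simp
  have "snd ` set (candidates j) \<subseteq> F"
    using maximal_packing_subset[OF packing_maximal[OF j3 j(2)]] set_candidates[OF j3 j(2)] by force
  then show ?thesis
    using offspring_eq[OF j3 j(2) q] snd_merge_cands_subset[of \<mu> _ "candidates j"] by force
qed

lemma offspring_subset_level:
  assumes j: "2 \<le> j" "j \<le> Jt" and q: "q \<in> Lv (j - 1)"
  shows "off j q \<subseteq> Lv j"
proof (cases "j = 2")
  case True
  then show ?thesis using level2 j q root by auto
next
  case False
  with j have "3 \<le> j" by simp
  then show ?thesis using level_eq j(2) q by blast
qed

lemma level_subset_F:
  assumes j: "1 \<le> j" "j \<le> Jt"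
  shows "Lv j \<subseteq> F"
proof -
  consider "j = 1" | "j = 2" | "3 \<le> j" using j by linarith
  then show ?thesis
  proof cases
    case 1
    then show ?thesis using root by simp
  next
    case 2
    then show ?thesis using level2 j unfolding maximal_packing_def is_packing_def by auto
  next
    case 3
    then show ?thesis using level_eq[OF 3 j(2)] offspring_subset_F[of j] j by fastforce
  qed
qed

lemma parent_in_F:
  assumes "2 \<le> j" "j \<le> Jt" "q \<in> Lv (j - 1)"
  shows "q \<in> F"
proof -
  have "1 \<le> j - 1" "j - 1 \<le> Jt" using assms(1,2) by auto
  with level_subset_F show ?thesis using assms(3) by blast
qed

lemma offspring_dist_parent:
  assumes j: "3 \<le> j" "j \<le> Jt" and q: "q \<in> Lv (j - 1)" and u: "u \<in> off j q"
  shows "L2dist \<mu> q u \<le> d / 2^(j - 2) + d / (2^(j - 1) * c)"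
proof -
  have "2 \<le> j" using j(1) by simp
  have \<eta>: "0 \<le> d / (2^(j - 1) * c)" using diam_nonneg c_pos by simp
  have "(q, u) \<in> set (merge_cands \<mu> (d / (2^(j - 1) * c)) (candidates j))"
    using offspring_eq[OF j q] u by auto
  from merge_cands_near_input[OF this \<eta>]
  obtain p where p: "p \<in> set (candidates j)" "fst p = q" "L2dist \<mu> u (snd p) \<le> d / (2^(j - 1) * c)"
    by auto
  then have "snd p \<in> packing j q" using set_candidates[OF j] by auto
  then have "L2dist \<mu> q (snd p) \<le> d / 2^(j - 2)" "snd p \<in> F"
    using maximal_packing_subset[OF packing_maximal[OF j q]] unfolding L2ball_def by auto
  moreover have "q \<in> F" "u \<in> F"
    using parent_in_F[OF \<open>2 \<le> j\<close> j(2) q] offspring_subset_F[OF \<open>2 \<le> j\<close> j(2) q] u by auto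
  ultimately show ?thesis
    using triangle[of q "snd p" u] p(3) by (simp add: L2dist_commute)
qed

lemma offspring_covers:
  assumes j: "2 \<le> j" "j \<le> Jt" and q: "q \<in> Lv (j - 1)"
    and f: "f \<in> F" and qf: "L2dist \<mu> q f \<le> d / 2^(j - 2)"
  shows "\<exists>u\<in>off j q. L2dist \<mu> u f \<le> d / (2^(j - 2) * c)"
proof (cases "j = 2")
  case True
  then have "maximal_packing \<mu> (d / c) F (off j q)"
    using level2 j q root by auto
  then show ?thesis
    using maximal_packing_covers[OF _ f] diam_nonneg c_pos True by simp
next
  case False
  with j have j3: "3 \<le> j" by simp
  define \<eta> where "\<eta> = d / (2^(j - 1) * c)"
  have \<eta>: "0 \<le> \<eta>" "2 * \<eta> = d / (2^(j - 2) * c)"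
    unfolding \<eta>_def using diam_nonneg c_pos power_pred_eq[OF j(1), of "2::real"] by auto
  have "f \<in> L2ball \<mu> q (d / 2^(j - 2)) \<inter> F" using f qf unfolding L2ball_def by auto
  from maximal_packing_covers[OF packing_maximal[OF j3 j(2) q] this \<eta>(1)[unfolded \<eta>_def]]
  obtain u' where u': "u' \<in> packing j q" "L2dist \<mu> u' f \<le> \<eta>"
    unfolding \<eta>_def by blast
  then have "(q, u') \<in> set (candidates j)" using set_candidates[OF j3 j(2)] q by auto
  from merge_cands_absorbs[OF this \<eta>(1)]
  obtain u where u: "(q, u) \<in> set (merge_cands \<mu> \<eta> (candidates j))" "L2dist \<mu> u u' \<le> \<eta>"
    by auto
  then have "u \<in> off j q" using offspring_eq[OF j3 j(2) q] unfolding \<eta>_def by auto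
  moreover have "u' \<in> F" using maximal_packing_subset[OF packing_maximal[OF j3 j(2) q]] u' by auto
  ultimately have "L2dist \<mu> u f \<le> 2 * \<eta>"
    using triangle[of u u' f] offspring_subset_F[OF j q] f u(2) u'(2) by auto
  then show ?thesis using \<open>u \<in> off j q\<close> \<eta>(2) by auto
qed

lemma level_separated:
  assumes j: "2 \<le> j" "j \<le> Jt" and uv: "u \<in> Lv j" "v \<in> Lv j" "u \<noteq> v"
  shows "d / (2^(j - 1) * c) < L2dist \<mu> u v"
proof (cases "j = 2")
  case True
  then have "d / c < L2dist \<mu> u v"
    using level2 j uv unfolding maximal_packing_def is_packing_def by auto
  moreover have "d / (2^(j - 1) * c) \<le> d / c"
    using True diam_nonneg c_pos by (simp add: divide_le_cancel frac_le)
  ultimately show ?thesis by linarith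
next
  case False
  with j have j3: "3 \<le> j" by simp
  obtain q1 q2 where "(q1, u) \<in> set (merge_cands \<mu> (d / (2^(j - 1) * c)) (candidates j))"
    "(q2, v) \<in> set (merge_cands \<mu> (d / (2^(j - 1) * c)) (candidates j))"
    using uv level_eq[OF j3 j(2)] offspring_eq[OF j3 j(2)] by auto
  from merge_cands_separated[OF this] show ?thesis using uv by simp
qed

lemma card_offspring_le_card_packing:
  assumes j: "3 \<le> j" "j \<le> Jt" and q: "q \<in> Lv (j - 1)" and fin: "finite (packing j q)"
  shows "finite (off j q)" "card (off j q) \<le> card (packing j q)"
proof -
  note off = offspring_eq[OF j q]
  have "off j q \<subseteq> snd ` set (merge_cands \<mu> (d / (2^(j - 1) * c)) (candidates j))"
    using off by force
  then show "finite (off j q)" by (rule finite_subset) simp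
  have "card (off j q) \<le> length (filter (\<lambda>p. fst p = q) (candidates j))"
    unfolding off by (rule card_merge_cands_offspring_le)
  also have "\<dots> = card (set (filter (\<lambda>p. fst p = q) (candidates j)))"
    using distinct_card[OF distinct_filter[OF distinct_candidates[OF j]]] by simp
  also have "set (filter (\<lambda>p. fst p = q) (candidates j)) = (\<lambda>u. (q, u)) ` packing j q"
    using set_candidates[OF j] q by auto
  also have "card \<dots> \<le> card (packing j q)" by (rule card_image_le[OF fin])
  finally show "card (off j q) \<le> card (packing j q)" .
qed

lemma card_offspring_le:
  assumes j: "2 \<le> j" "j \<le> Jt" and q: "q \<in> Lv (j - 1)"
    and fin: "loc_entropy \<mu> F (d / 2^(j - 2)) (2 * c) \<noteq> \<infinity>"
  shows "finite (off j q)" "card (off j q) \<le> the_enat (loc_entropy \<mu> F (d / 2^(j - 2)) (2 * c))"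
proof -
  have qF: "q \<in> F" by (rule parent_in_F[OF j q])
  have "finite (off j q) \<and> card (off j q) \<le> the_enat (loc_entropy \<mu> F (d / 2^(j - 2)) (2 * c))"
  proof (cases "j = 2")
    case True
    then have "is_packing \<mu> (d / c) F (off j q)"
      using level2 j q root unfolding maximal_packing_def by auto
    moreover have "off j q \<subseteq> F \<inter> L2ball \<mu> q (d / 2^(j - 2))"
      using L2dist_le_diam qF offspring_subset_F[OF j q] True unfolding L2ball_def by auto
    moreover have "d / 2^(j - 2) / (2 * c) \<le> d / c"
      using diam_nonneg c_pos True by (simp add: frac_le)
    ultimately have "is_packing \<mu> (d / 2^(j - 2) / (2 * c)) (F \<inter> L2ball \<mu> q (d / 2^(j - 2))) (off j q)"
      by (rule is_packing_mono[OF _ subset_refl])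
    then show ?thesis using packing_card_le_loc_entropy[OF qF _ fin] by simp
  next
    case False
    with j have j3: "3 \<le> j" by simp
    note P = packing_maximal[OF j3 j(2) q]
    have "is_packing \<mu> (d / (2 ^ (j - 1) * c)) (L2ball \<mu> q (d / 2^(j - 2)) \<inter> F) (packing j q)"
      using P unfolding maximal_packing_def by auto
    moreover have "packing j q \<subseteq> F \<inter> L2ball \<mu> q (d / 2^(j - 2))"
      using maximal_packing_subset[OF P] by auto
    ultimately have "is_packing \<mu> (d / 2^(j - 2) / (2 * c)) (F \<inter> L2ball \<mu> q (d / 2^(j - 2))) (packing j q)"
      by (rule is_packing_mono[OF _ subset_refl]) (unfold power_pred_eq[OF j(1)], simp add: mult_ac)
    from packing_card_le_loc_entropy[OF qF this fin]
    show ?thesis using card_offspring_le_card_packing[OF j3 j(2) q] by (meson le_trans)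
  qed
  then show "finite (off j q)" "card (off j q) \<le> the_enat (loc_entropy \<mu> F (d / 2^(j - 2)) (2 * c))"
    by auto
qed

lemma card_level_near_le:
  assumes j: "2 \<le> j" "j - 1 \<le> Jt" and f: "f \<in> F"
    and fin: "loc_entropy \<mu> F (d / 2^(j - 2)) (2 * c) \<noteq> \<infinity>"
  defines "Q \<equiv> Lv (j - 1) \<inter> L2ball \<mu> f (d / 2^(j - 2))"
  shows "finite Q" "card Q \<le> the_enat (loc_entropy \<mu> F (d / 2^(j - 2)) (2 * c))"
proof -
  have sep: "d / 2^(j - 2) / (2 * c) < L2dist \<mu> u v" if "u \<in> Q" "v \<in> Q" "u \<noteq> v" for u v
  proof -
    have "j \<noteq> 2" using that root(2) unfolding Q_def by auto
    then have "2 \<le> j - 1" using j(1) by simp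
    then have "d / (2^(j - 1 - 1) * c) < L2dist \<mu> u v"
      using level_separated[OF _ j(2)] that unfolding Q_def by blast
    moreover have "j - 1 - 1 = j - 2" by simp
    moreover have "d / 2^(j - 2) / (2 * c) \<le> d / (2^(j - 2) * c)"
      using diam_nonneg c_pos by (simp add: frac_le)
    ultimately show ?thesis by simp
  qed
  have "1 \<le> j - 1" using j(1) by simp
  then have "Q \<subseteq> F \<inter> L2ball \<mu> f (d / 2^(j - 2))"
    using level_subset_F[OF _ j(2)] unfolding Q_def by blast
  then have "is_packing \<mu> (d / 2^(j - 2) / (2 * c)) (F \<inter> L2ball \<mu> f (d / 2^(j - 2))) Q"
    using sep unfolding is_packing_def by blast
  from packing_card_le_loc_entropy[OF f this fin]
  show "finite Q" "card Q \<le> the_enat (loc_entropy \<mu> F (d / 2^(j - 2)) (2 * c))" .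
qed

lemma estimator_path_in_level:
  assumes path: "estimator_path \<mu> N k G C c d Jt \<nu>1 off X \<nu>" and j: "1 \<le> j" "j \<le> Jt"
  shows "\<nu> j \<in> Lv j"
  using j
proof (induction j rule: nat_induct_at_least)
  case base
  then show ?case using path root unfolding estimator_path_def by auto
next
  case (Suc n)
  then have "selected \<mu> N k G X C (d / (2^(Suc n - 2) * c)) (off (Suc n) (\<nu> (Suc n - 1))) (\<nu> (Suc n))"
    by (intro estimator_path_selected[OF path]) auto
  then have "\<nu> (Suc n) \<in> off (Suc n) (\<nu> n)" unfolding selected_def by simp
  then show ?case using offspring_subset_level[of "Suc n" "\<nu> n"] Suc by auto
qed

lemma near_offspring:
  assumes "2 \<le> j" "j \<le> Jt" "q \<in> Lv (j - 1)" "f \<in> F" "L2dist \<mu> q f \<le> d / 2^(j - 2)"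
  shows "near_offspring \<mu> off d c f j q \<in> off j q"
    "L2dist \<mu> (near_offspring \<mu> off d c f j q) f \<le> d / (2^(j - 2) * c)"
  using someI_ex[OF offspring_covers[OF assms, unfolded Bex_def]]
  unfolding near_offspring_def by auto

end

section \<open>Robust comparisons along the estimator path\<close>

definition group_prefers :: "(nat \<Rightarrow> nat set) \<Rightarrow> (nat \<Rightarrow> 'a) \<Rightarrow> ('a \<Rightarrow> real) \<Rightarrow> ('a \<Rightarrow> real) \<Rightarrow> nat \<Rightarrow> bool" where
  "group_prefers G X u v g \<longleftrightarrow> 0 < (\<Sum>i\<in>G g. ln (u (X i) / v (X i)))"

text \<open>Strict version of \<open>psi\<close>: since \<open>psi\<close> only asks for at least half of the groups, on ties it holds
  in both directions.\<close>

definition majority_prefers ::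
  "nat \<Rightarrow> nat \<Rightarrow> (nat \<Rightarrow> nat set) \<Rightarrow> (nat \<Rightarrow> 'a) \<Rightarrow> ('a \<Rightarrow> real) \<Rightarrow> ('a \<Rightarrow> real) \<Rightarrow> bool" where
  "majority_prefers N k G X u v \<longleftrightarrow>
     real N / (2 * real k) < real (card {g \<in> {..<N div k}. group_prefers G X u v g})"

lemma majority_prefers_psi:
  assumes k: "0 < k" "k dvd N" and pos: "\<forall>g<N div k. \<forall>i\<in>G g. 0 < u (X i) \<and> 0 < v (X i)"
    and maj: "majority_prefers N k G X u v"
  shows "psi N k G X u v" "\<not> psi N k G X v u"
proof -
  define A where "A = {g \<in> {..<N div k}. group_prefers G X u v g}"
  define A' where "A' = {g \<in> {..<N div k}. group_prefers G X v u g}"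
  have "(\<Sum>i\<in>G g. ln (v (X i) / u (X i))) = - (\<Sum>i\<in>G g. ln (u (X i) / v (X i)))" if "g < N div k" for g
  proof -
    have "(\<Sum>i\<in>G g. ln (v (X i) / u (X i))) = (\<Sum>i\<in>G g. - ln (u (X i) / v (X i)))"
      using pos that by (intro sum.cong) (auto simp: ln_div)
    then show ?thesis by (simp add: sum_negf)
  qed
  then have "A \<inter> A' = {}" unfolding A_def A'_def group_prefers_def by auto
  then have "card A + card A' = card (A \<union> A')" by (simp add: card_Un_disjoint A_def A'_def)
  also have "\<dots> \<le> N div k" by (rule order_trans[OF card_mono[of "{..<N div k}"]]) (auto simp: A_def A'_def)
  finally have "card A + card A' \<le> N div k" .
  then have "real (card A + card A') \<le> real (N div k)" by (simp only: of_nat_le_iff)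
  then have "real (card A) + real (card A') \<le> 2 * (real N / (2 * real k))"
    using k by (simp add: real_of_nat_div)
  moreover have "real N / (2 * real k) < real (card A)" using maj unfolding majority_prefers_def A_def .
  ultimately have "real (card A') < real N / (2 * real k)" by linarith
  then show "psi N k G X u v" "\<not> psi N k G X v u"
    using maj unfolding psi_def majority_prefers_def A'_def group_prefers_def by simp_all
qed

lemma selected_near_dominant:
  assumes "finite U" and u: "u \<in> U" and "0 < C * \<delta>"
    and dominant: "\<forall>v\<in>U. C * \<delta> \<le> L2dist M u v \<longrightarrow> psi N k G X u v \<and> \<not> psi N k G X v u"
    and sel: "selected M N k G X C \<delta> U w"
  shows "L2dist M w u < C * \<delta>"
proof (rule ccontr)
  assume "\<not> ?thesis"
  then have far: "C * \<delta> \<le> L2dist M u w" by (simp add: L2dist_commute)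
  have "w \<in> U" and le: "Tval M N k G X C \<delta> U w \<le> Tval M N k G X C \<delta> U u"
    using sel u unfolding selected_def by auto
  have "{L2dist M u v | v. v \<in> U \<and> prec N k G X u v \<and> C * \<delta> \<le> L2dist M u v} = {}"
    using dominant unfolding prec_def by auto
  then have "Tval M N k G X C \<delta> U u = 0" unfolding Tval_def by (simp only: Un_empty_left Max_singleton)
  moreover have "prec N k G X w u" using dominant \<open>w \<in> U\<close> far unfolding prec_def by blast
  then have "L2dist M w u \<in> {L2dist M w v | v. v \<in> U \<and> prec N k G X w v \<and> C * \<delta> \<le> L2dist M w v} \<union> {0}"
    using u far by (auto simp: L2dist_commute)
  then have "L2dist M w u \<le> Tval M N k G X C \<delta> U w"
    unfolding Tval_def using \<open>finite U\<close> by (intro Max_ge) auto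
  ultimately show False using le far \<open>0 < C * \<delta>\<close> by (simp add: L2dist_commute)
qed

locale estimator_run = multiscale_tree +
  fixes f :: "'a \<Rightarrow> real" and N k :: nat and G :: "nat \<Rightarrow> nat set" and X :: "nat \<Rightarrow> 'a"
    and \<nu> :: "nat \<Rightarrow> 'a \<Rightarrow> real" and J1 :: nat
  assumes f_in: "f \<in> F" and alpha_pos: "0 < \<alpha>" and c_ge: "4 \<le> c" and d_pos: "0 < d"
    and J1: "1 \<le> J1" "J1 \<le> Jt"
    and entropy_finite: "\<And>j. 2 \<le> j \<Longrightarrow> j \<le> J1 \<Longrightarrow> loc_entropy \<mu> F (d / 2^(j - 2)) (2 * c) \<noteq> \<infinity>"
    and k: "0 < k" "k dvd N" and sample_in: "\<forall>i<N. X i \<in> B" and groups_in: "\<forall>g<N div k. G g \<subseteq> {..<N}"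
    and path: "estimator_path \<mu> N k G (c / 2 - 1) c d Jt \<nu>1 off X \<nu>"
begin

definition comparison_fails :: "nat \<Rightarrow> bool" where
  "comparison_fails j \<longleftrightarrow> (\<exists>q \<in> Lv (j - 1) \<inter> L2ball \<mu> f (d / 2^(j - 2)). \<exists>v\<in>off j q.
      (c / 2 - 1) * (d / (2^(j - 2) * c)) \<le> L2dist \<mu> (near_offspring \<mu> off d c f j q) v \<and>
      \<not> majority_prefers N k G X (near_offspring \<mu> off d c f j q) v)"

lemma F_pos_on_groups:
  assumes "h \<in> F" "g < N div k" "i \<in> G g"
  shows "0 < h (X i)"
proof -
  have "X i \<in> B" using assms(2,3) groups_in sample_in by auto
  moreover have "h \<in> dens_class \<mu> B \<alpha> \<beta>" using assms(1) F_dens by auto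
  ultimately have "\<alpha> \<le> h (X i)" unfolding dens_class_def by auto
  then show ?thesis using alpha_pos by simp
qed

lemma path_in_F: "1 \<le> j \<Longrightarrow> j \<le> Jt \<Longrightarrow> \<nu> j \<in> F"
  using estimator_path_in_level[OF path] level_subset_F by blast

lemma path_step:
  assumes j: "2 \<le> j" "j \<le> Jt"
  shows "L2dist \<mu> (\<nu> (j - 1)) (\<nu> j) \<le> 2 * d / 2^(j - 2)"
proof (cases "j = 2")
  case True
  have "L2dist \<mu> (\<nu> (j - 1)) (\<nu> j) \<le> d"
    using L2dist_le_diam path_in_F j by simp
  then show ?thesis using True d_pos by simp
next
  case False
  then have j3: "3 \<le> j" using j by simp
  have "\<nu> j \<in> off j (\<nu> (j - 1))"
    using estimator_path_selected[OF path j] unfolding selected_def by simp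
  then have "L2dist \<mu> (\<nu> (j - 1)) (\<nu> j) \<le> d / 2^(j - 2) + d / (2^(j - 1) * c)"
    using offspring_dist_parent[OF j3 j(2)] estimator_path_in_level[OF path, of "j - 1"] j by simp
  also have "d / (2^(j - 1) * c) \<le> d / 2^(j - 2)"
    using c_ge d_pos unfolding power_pred_eq[OF j(1)] by (simp add: field_simps)
  finally show ?thesis by simp
qed

text \<open>The steps of the path form a geometric series.\<close>

lemma path_dist_drift:
  assumes j0: "1 \<le> j0" and i: "j0 \<le> i" "i \<le> Jt"
  shows "L2dist \<mu> (\<nu> i) f \<le> L2dist \<mu> (\<nu> j0) f + 4 * d / 2^(j0 - 1) - 4 * d / 2^(i - 1)"
  using i
proof (induction i rule: nat_induct_at_least)
  case (Suc n)
  have "L2dist \<mu> (\<nu> (Suc n)) f \<le> L2dist \<mu> (\<nu> (Suc n)) (\<nu> n) + L2dist \<mu> (\<nu> n) f"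
    using triangle path_in_F f_in Suc j0 by auto
  also have "\<dots> \<le> 2 * d / 2^(n - 1) + (L2dist \<mu> (\<nu> j0) f + 4 * d / 2^(j0 - 1) - 4 * d / 2^(n - 1))"
    using path_step[of "Suc n"] Suc j0 by (simp add: L2dist_commute)
  also have "\<dots> = L2dist \<mu> (\<nu> j0) f + 4 * d / 2^(j0 - 1) - 4 * d / 2^(Suc n - 1)"
    using Suc j0 by (cases n) (simp_all add: field_simps)
  finally show ?case .
qed simp

lemma near_offspring_dominates:
  assumes j: "2 \<le> j" "j \<le> J1" and q: "q \<in> Lv (j - 1) \<inter> L2ball \<mu> f (d / 2^(j - 2))"
    and "\<not> comparison_fails j"
  defines "u \<equiv> near_offspring \<mu> off d c f j q"
  shows "\<forall>v\<in>off j q. (c / 2 - 1) * (d / (2^(j - 2) * c)) \<le> L2dist \<mu> u v \<longrightarrow>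
           psi N k G X u v \<and> \<not> psi N k G X v u"
proof (intro ballI impI)
  fix v assume v: "v \<in> off j q" "(c / 2 - 1) * (d / (2^(j - 2) * c)) \<le> L2dist \<mu> u v"
  have "j \<le> Jt" using j J1 by simp
  then have "u \<in> F" "v \<in> F"
    using near_offspring(1) offspring_subset_F[of j q] j q v f_in
    unfolding u_def L2ball_def by (auto simp: L2dist_commute)
  then have "\<forall>g<N div k. \<forall>i\<in>G g. 0 < u (X i) \<and> 0 < v (X i)"
    using F_pos_on_groups by blast
  moreover have "majority_prefers N k G X u v"
    using assms(4) q v unfolding comparison_fails_def u_def by blast
  ultimately show "psi N k G X u v \<and> \<not> psi N k G X v u"
    using majority_prefers_psi[OF k] by blast
qed

lemma path_halves_dist:
  assumes j: "2 \<le> j" "j \<le> J1" and prev: "L2dist \<mu> (\<nu> (j - 1)) f \<le> d / 2^(j - 2)"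
    and ok: "\<not> comparison_fails j"
  shows "L2dist \<mu> (\<nu> j) f \<le> d / 2^(j - 1)"
proof -
  define q where "q = \<nu> (j - 1)"
  define u where "u = near_offspring \<mu> off d c f j q"
  define \<delta> where "\<delta> = d / (2^(j - 2) * c)"
  have jt: "j \<le> Jt" using j J1 by simp
  have q: "q \<in> Lv (j - 1)" unfolding q_def using estimator_path_in_level[OF path, of "j - 1"] j jt by simp
  have u: "u \<in> off j q" "L2dist \<mu> u f \<le> \<delta>"
    using near_offspring[OF j(1) jt q f_in] prev unfolding u_def \<delta>_def q_def by auto
  have "finite (off j q)" using card_offspring_le(1)[OF j(1) jt q] entropy_finite j by simp
  moreover have "selected \<mu> N k G X (c / 2 - 1) \<delta> (off j q) (\<nu> j)"
    using estimator_path_selected[OF path j(1) jt] unfolding q_def \<delta>_def .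
  moreover have "0 < (c / 2 - 1) * \<delta>" unfolding \<delta>_def using c_ge d_pos by simp
  moreover have "q \<in> Lv (j - 1) \<inter> L2ball \<mu> f (d / 2^(j - 2))"
    using q prev unfolding q_def L2ball_def by (simp add: L2dist_commute)
  ultimately have "L2dist \<mu> (\<nu> j) u < (c / 2 - 1) * \<delta>"
    using selected_near_dominant[OF _ u(1)] near_offspring_dominates[OF j _ ok]
    unfolding u_def \<delta>_def by blast
  moreover have "L2dist \<mu> (\<nu> j) f \<le> L2dist \<mu> (\<nu> j) u + L2dist \<mu> u f"
    using triangle path_in_F[of j] j jt offspring_subset_F[OF j(1) jt q] u(1) f_in by auto
  moreover have "(c / 2 - 1) * \<delta> + \<delta> = d / 2^(j - 1)"
    unfolding \<delta>_def power_pred_eq[OF j(1)] using c_ge by (simp add: field_simps)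
  ultimately show ?thesis using u(2) by linarith
qed

lemma path_close_before_failure:
  assumes "1 \<le> j" "j \<le> J1" "\<forall>i\<in>{2..j}. \<not> comparison_fails i"
  shows "L2dist \<mu> (\<nu> j) f \<le> d / 2^(j - 1)"
  using assms
proof (induction j rule: nat_induct_at_least)
  case base
  then show ?case using L2dist_le_diam path_in_F f_in J1 by simp
next
  case (Suc n)
  then show ?case using path_halves_dist[of "Suc n"] by simp
qed

lemma path_final_dist:
  assumes "1 \<le> j" "j \<le> Jt" "L2dist \<mu> (\<nu> j) f \<le> d / 2^(j - 1)"
  shows "(L2dist \<mu> (\<nu> Jt) f)\<^sup>2 \<le> 25 * d\<^sup>2 / 4^(j - 1)"
proof -
  have "0 \<le> 4 * d / 2^(Jt - 1)" "5 * d / 2^(j - 1) = d / 2^(j - 1) + 4 * d / 2^(j - 1)"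
    using d_pos by (simp_all add: field_simps)
  then have "L2dist \<mu> (\<nu> Jt) f \<le> 5 * d / 2^(j - 1)"
    using path_dist_drift[OF assms(1,2) order_refl] assms(3) by linarith
  then have "(L2dist \<mu> (\<nu> Jt) f)\<^sup>2 \<le> (5 * d / 2^(j - 1))\<^sup>2"
    by (intro power_mono L2dist_nonneg)
  also have "\<dots> = 25 * d\<^sup>2 / 4^(j - 1)"
    using power2_two_pow[of "j - 1"] by (simp add: power_divide power_mult_distrib)
  finally show ?thesis .
qed

text \<open>Up to the first level whose comparisons fail, the path halves its distance to \<open>f\<close> at
  every level.\<close>

lemma path_sq_dist_le:
  "(L2dist \<mu> (\<nu> Jt) f)\<^sup>2 \<le> 25 * d\<^sup>2 / 4^(J1 - 1) +
     (\<Sum>j\<in>{2..J1}. if comparison_fails j then 25 * d\<^sup>2 / 4^(j - 2) else 0)"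
  (is "_ \<le> ?last + ?sum")
proof (cases "\<exists>j. j \<in> {2..J1} \<and> comparison_fails j")
  case True
  then obtain j where j: "j \<in> {2..J1}" "comparison_fails j"
    and before: "\<forall>i<j. \<not> (i \<in> {2..J1} \<and> comparison_fails i)"
    using exists_least_iff[of "\<lambda>j. j \<in> {2..J1} \<and> comparison_fails j"] by blast
  have "L2dist \<mu> (\<nu> (j - 1)) f \<le> d / 2^(j - 1 - 1)"
  proof (rule path_close_before_failure)
    show "1 \<le> j - 1" "j - 1 \<le> J1" using j(1) by auto
    show "\<forall>i\<in>{2..j - 1}. \<not> comparison_fails i" using before j by auto
  qed
  then have "(L2dist \<mu> (\<nu> Jt) f)\<^sup>2 \<le> 25 * d\<^sup>2 / 4^(j - 1 - 1)"
    by (rule path_final_dist[rotated 2]) (use j J1 in auto)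
  then have "(L2dist \<mu> (\<nu> Jt) f)\<^sup>2 \<le> 25 * d\<^sup>2 / 4^(j - 2)"
    by (simp add: numeral_2_eq_2)
  also have "\<dots> = (if comparison_fails j then 25 * d\<^sup>2 / 4^(j - 2) else 0)" using j by simp
  also have "\<dots> \<le> ?sum" by (rule member_le_sum) (use j in auto)
  finally show ?thesis by (simp add: add_increasing)
next
  case False
  then have "(L2dist \<mu> (\<nu> Jt) f)\<^sup>2 \<le> ?last"
    using path_final_dist path_close_before_failure J1 by auto
  moreover have "0 \<le> ?sum" by (intro sum_nonneg) simp
  ultimately show ?thesis by linarith
qed

end

section \<open>Hellinger affinity and products over groups\<close>

lemma sqrt_mult_le_mean_minus_sq:
  fixes a b \<alpha> \<beta> :: real
  assumes "\<alpha> \<le> a" "a \<le> \<beta>" "\<alpha> \<le> b" "b \<le> \<beta>" "0 < \<alpha>"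
  shows "sqrt a * sqrt b \<le> (a + b) / 2 - (b - a)\<^sup>2 / (8 * \<beta>)"
proof -
  define x y where "x = sqrt a" and "y = sqrt b"
  have ab: "a = x\<^sup>2" "b = y\<^sup>2" unfolding x_def y_def using assms by auto
  have "(x + y)\<^sup>2 \<le> 2 * (x\<^sup>2 + y\<^sup>2)"
    using zero_le_power2[of "x - y"] by (simp add: power2_eq_square algebra_simps)
  also have "\<dots> \<le> 4 * \<beta>" using assms unfolding ab by simp
  finally have "(y - x)\<^sup>2 * (x + y)\<^sup>2 \<le> (y - x)\<^sup>2 * (4 * \<beta>)"
    by (intro mult_left_mono) simp_all
  moreover have "(b - a)\<^sup>2 = (y - x)\<^sup>2 * (x + y)\<^sup>2"
    unfolding ab by (simp add: power2_eq_square algebra_simps)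
  ultimately have "(b - a)\<^sup>2 / (8 * \<beta>) \<le> (y - x)\<^sup>2 / 2"
    using assms by (simp add: field_simps)
  moreover have "(a + b) / 2 - x * y = (y - x)\<^sup>2 / 2"
    unfolding ab by (simp add: power2_eq_square algebra_simps)
  ultimately show ?thesis unfolding x_def y_def by linarith
qed

lemma sqrt_ratio_minus_one_sq_le:
  fixes a b \<alpha> :: real
  assumes "\<alpha> \<le> a" "\<alpha> \<le> b" "0 < \<alpha>"
  shows "(sqrt (b / a) - 1)\<^sup>2 \<le> (b - a)\<^sup>2 / (4 * \<alpha>\<^sup>2)"
proof -
  define x y where "x = sqrt a" and "y = sqrt b"
  have ab: "a = x\<^sup>2" "b = y\<^sup>2" and pos: "0 < x" "0 < y"
    unfolding x_def y_def using assms by auto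
  have "4 * \<alpha> \<le> (x + y)\<^sup>2"
  proof -
    have "\<alpha>\<^sup>2 \<le> (x * y)\<^sup>2"
      using assms mult_mono[of \<alpha> a \<alpha> b] unfolding ab
        by (simp add: power_mult_distrib power2_eq_square mult_ac)
    then have "\<alpha> \<le> x * y" by (rule power2_le_imp_le) (use pos in simp)
    then show ?thesis using assms unfolding ab by (simp add: power2_sum)
  qed
  then have "(y - x)\<^sup>2 * (4 * \<alpha>) \<le> (y - x)\<^sup>2 * (x + y)\<^sup>2"
    by (intro mult_left_mono) simp_all
  also have "\<dots> = (b - a)\<^sup>2"
    unfolding ab by (simp add: power2_eq_square algebra_simps)
  finally have "(y - x)\<^sup>2 * (4 * \<alpha>) / (4 * \<alpha>\<^sup>2) \<le> (b - a)\<^sup>2 / (4 * \<alpha>\<^sup>2)"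
    by (rule divide_right_mono) simp
  moreover have "P * (4 * \<alpha>) / (4 * \<alpha>\<^sup>2) = P / \<alpha>" for P :: real
    using assms by (simp add: power2_eq_square)
  ultimately have sep: "(y - x)\<^sup>2 / \<alpha> \<le> (b - a)\<^sup>2 / (4 * \<alpha>\<^sup>2)" by simp
  have "(sqrt (b / a) - 1)\<^sup>2 = (y - x)\<^sup>2 / a"
    using pos unfolding ab by (simp add: real_sqrt_divide power_divide field_simps)
  also have "\<dots> \<le> (y - x)\<^sup>2 / \<alpha>"
    using assms by (intro divide_left_mono) auto
  finally show ?thesis using sep by linarith
qed

text \<open>Pointwise form of the affinity bound; \<open>e\<close> is the defect \<open>f - u\<close>, weighed against the
  separation \<open>v - u\<close> by AM-GM with weight \<open>C\<close>.\<close>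

lemma affinity_pointwise_le:
  fixes a b e \<alpha> \<beta> C :: real
  assumes ab: "\<alpha> \<le> a" "a \<le> \<beta>" "\<alpha> \<le> b" "b \<le> \<beta>" and "0 < \<alpha>" "0 < C"
  shows "(a + e) * sqrt (b / a) \<le>
    (a + b) / 2 - (b - a)\<^sup>2 / (8 * \<beta>) + e + (C * e\<^sup>2 + (b - a)\<^sup>2 / (4 * \<alpha>\<^sup>2 * C)) / 2"
proof -
  define w where "w = sqrt (b / a) - 1"
  have "a * sqrt (b / a) = sqrt a * sqrt b"
  proof -
    have cancel: "s * s * (t / s) = s * t" if "0 < s" for s t :: real
      using that by (simp add: field_simps)
    have "a * sqrt (b / a) = sqrt a * sqrt a * (sqrt b / sqrt a)"
      using assms by (simp add: real_sqrt_divide)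
    then show ?thesis using cancel[of "sqrt a" "sqrt b"] assms by simp
  qed
  then have "(a + e) * sqrt (b / a) = sqrt a * sqrt b + e + e * w"
    unfolding w_def by (simp add: algebra_simps)
  moreover have "e * w \<le> (C * e\<^sup>2 + w\<^sup>2 / C) / 2"
    using zero_le_power2[of "C * e - w"] \<open>0 < C\<close>
    by (simp add: power2_eq_square field_simps)
  moreover have "w\<^sup>2 / C \<le> (b - a)\<^sup>2 / (4 * \<alpha>\<^sup>2 * C)"
    using sqrt_ratio_minus_one_sq_le[of \<alpha> a b] assms unfolding w_def
    by (simp add: divide_right_mono flip: divide_divide_eq_left)
  then have "(C * e\<^sup>2 + w\<^sup>2 / C) / 2 \<le> (C * e\<^sup>2 + (b - a)\<^sup>2 / (4 * \<alpha>\<^sup>2 * C)) / 2"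
    by (rule divide_right_mono[OF add_left_mono]) simp
  moreover note sqrt_mult_le_mean_minus_sq[OF ab \<open>0 < \<alpha>\<close>]
  ultimately show ?thesis by linarith
qed

lemma bounded_measurable_sqrt_ratio:
  assumes "space M = B" "0 < \<alpha>" "u \<in> dens_class M B \<alpha> \<beta>" "v \<in> dens_class M B \<alpha> \<beta>"
  shows "bounded_measurable M (\<lambda>z. sqrt (v z / u z))"
  unfolding bounded_measurable_def
proof (intro conjI exI[of _ "sqrt (\<beta> / \<alpha>)"] ballI)
  have "u \<in> borel_measurable M" "v \<in> borel_measurable M"
    using assms unfolding dens_class_def by auto
  then show "(\<lambda>z. sqrt (v z / u z)) \<in> borel_measurable M" by measurable
  fix z assume "z \<in> space M"
  then have "\<alpha> \<le> u z" "\<alpha> \<le> v z" "v z \<le> \<beta>" using assms unfolding dens_class_def by auto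
  then show "\<bar>sqrt (v z / u z)\<bar> \<le> sqrt (\<beta> / \<alpha>)"
    using \<open>0 < \<alpha>\<close> by (simp add: frac_le)
qed

lemma (in prob_space) affinity_le:
  assumes B: "space M = B" and "0 < \<alpha>" "0 < C"
    and f: "f \<in> dens_class M B \<alpha> \<beta>" and u: "u \<in> dens_class M B \<alpha> \<beta>" and v: "v \<in> dens_class M B \<alpha> \<beta>"
  shows "(\<integral>z. f z * sqrt (v z / u z) \<partial>M) \<le>
     1 - (L2dist M u v)\<^sup>2 / (8 * \<beta>) + (C * (L2dist M f u)\<^sup>2 + (L2dist M u v)\<^sup>2 / (4 * \<alpha>\<^sup>2 * C)) / 2"
proof -
  have bm: "bounded_measurable M f" "bounded_measurable M u" "bounded_measurable M v"
    using f u v B by (auto intro: dens_class_bounded_measurable)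
  note int = integrable_bounded_measurable[OF bm(1)] integrable_bounded_measurable[OF bm(2)]
    integrable_bounded_measurable[OF bm(3)]
    integrable_bounded_measurable[OF bounded_measurable_power2[OF bounded_measurable_diff[OF bm(1,2)]]]
    integrable_bounded_measurable[OF bounded_measurable_power2[OF bounded_measurable_diff[OF bm(2,3)]]]
  define \<kappa> where "\<kappa> = 1 / (8 * \<alpha>\<^sup>2 * C) - 1 / (8 * \<beta>)"
  define R where "R z = u z / 2 + v z / 2 + f z - u z + C / 2 * (f z - u z)\<^sup>2 + \<kappa> * (u z - v z)\<^sup>2" for z
  have "f z * sqrt (v z / u z) \<le> R z" if "z \<in> space M" for z
  proof -
    have "\<alpha> \<le> u z" "u z \<le> \<beta>" "\<alpha> \<le> v z" "v z \<le> \<beta>" using u v that B unfolding dens_class_def by auto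
    from affinity_pointwise_le[OF this \<open>0 < \<alpha>\<close> \<open>0 < C\<close>, of "f z - u z"]
    show ?thesis unfolding R_def \<kappa>_def by (simp add: power2_commute[of "v z"] field_simps)
  qed
  moreover have "integrable M R" using int unfolding R_def by simp
  moreover have "integrable M (\<lambda>z. f z * sqrt (v z / u z))"
    by (intro integrable_bounded_measurable bounded_measurable_mult
        bounded_measurable_sqrt_ratio[OF B \<open>0 < \<alpha>\<close> u v] bm(1))
  ultimately have "(\<integral>z. f z * sqrt (v z / u z) \<partial>M) \<le> (\<integral>z. R z \<partial>M)"
    by (intro integral_mono) auto
  also have "(\<integral>z. R z \<partial>M) = 1 + C / 2 * (L2dist M f u)\<^sup>2 + \<kappa> * (L2dist M u v)\<^sup>2"
    using int f u v unfolding R_def dens_class_def power2_L2dist by simp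
  also have "\<dots> = 1 - (L2dist M u v)\<^sup>2 / (8 * \<beta>) + (C * (L2dist M f u)\<^sup>2 + (L2dist M u v)\<^sup>2 / (4 * \<alpha>\<^sup>2 * C)) / 2"
    unfolding \<kappa>_def by (simp add: field_simps)
  finally show ?thesis .
qed

lemma (in prob_space) affinity_le_exp:
  assumes B: "space M = B" and "0 < \<alpha>" and C: "8 * \<beta> + 2 * \<beta> / \<alpha>\<^sup>2 \<le> C" and "0 \<le> \<delta>"
    and f: "f \<in> dens_class M B \<alpha> \<beta>" and u: "u \<in> dens_class M B \<alpha> \<beta>" and v: "v \<in> dens_class M B \<alpha> \<beta>"
    and near: "L2dist M u f \<le> \<delta>" and far: "C * \<delta> \<le> L2dist M u v"
  shows "(\<integral>z. f z * sqrt (v z / u z) \<partial>M) \<le> exp (- ((L2dist M u v)\<^sup>2 / (16 * \<beta>)))"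
proof -
  define s where "s = L2dist M u v"
  obtain z where "z \<in> space M" using not_empty by blast
  then have "0 < \<beta>" using f B \<open>0 < \<alpha>\<close> unfolding dens_class_def by force
  moreover have "0 \<le> 2 * \<beta> / \<alpha>\<^sup>2" using \<open>0 < \<beta>\<close> by simp
  ultimately have "0 < C" using C by linarith
  have "C * (L2dist M f u)\<^sup>2 \<le> C * \<delta>\<^sup>2"
    using near \<open>0 < C\<close> by (intro mult_left_mono power_mono) (simp_all add: L2dist_commute L2dist_nonneg)
  also have "\<dots> = (C * \<delta>)\<^sup>2 / C" using \<open>0 < C\<close> by (simp add: power2_eq_square)
  also have "\<dots> \<le> s\<^sup>2 / C"
    using far \<open>0 < C\<close> \<open>0 \<le> \<delta>\<close> unfolding s_def by (intro divide_right_mono power_mono) simp_all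
  finally have "(C * (L2dist M f u)\<^sup>2 + s\<^sup>2 / (4 * \<alpha>\<^sup>2 * C)) / 2 \<le> (s\<^sup>2 / C + s\<^sup>2 / (4 * \<alpha>\<^sup>2 * C)) / 2"
    by (rule divide_right_mono[OF add_right_mono]) simp
  also have "\<dots> = s\<^sup>2 * ((4 * \<alpha>\<^sup>2 + 1) / (8 * \<alpha>\<^sup>2 * C))"
    using \<open>0 < \<alpha>\<close> \<open>0 < C\<close> by (simp add: field_simps)
  also have "\<dots> \<le> s\<^sup>2 * (1 / (16 * \<beta>))"
  proof (rule mult_left_mono)
    have "16 * \<beta> * (4 * \<alpha>\<^sup>2 + 1) = 8 * \<alpha>\<^sup>2 * (8 * \<beta> + 2 * \<beta> / \<alpha>\<^sup>2)"
      using \<open>0 < \<alpha>\<close> by (simp add: field_simps)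
    also have "\<dots> \<le> 8 * \<alpha>\<^sup>2 * C" using C by (intro mult_left_mono) auto
    finally show "(4 * \<alpha>\<^sup>2 + 1) / (8 * \<alpha>\<^sup>2 * C) \<le> 1 / (16 * \<beta>)"
      using \<open>0 < \<alpha>\<close> \<open>0 < \<beta>\<close> \<open>0 < C\<close> by (simp add: field_simps)
  qed simp
  finally have "(C * (L2dist M f u)\<^sup>2 + s\<^sup>2 / (4 * \<alpha>\<^sup>2 * C)) / 2 \<le> s\<^sup>2 / (16 * \<beta>)" by simp
  moreover have "s\<^sup>2 / (8 * \<beta>) = 2 * (s\<^sup>2 / (16 * \<beta>))" by simp
  ultimately have "(\<integral>z. f z * sqrt (v z / u z) \<partial>M) \<le> 1 - s\<^sup>2 / (16 * \<beta>)"
    using affinity_le[OF B \<open>0 < \<alpha>\<close> \<open>0 < C\<close> f u v] unfolding s_def by linarith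
  also have "\<dots> \<le> exp (- (s\<^sup>2 / (16 * \<beta>)))"
    using exp_ge_add_one_self[of "- (s\<^sup>2 / (16 * \<beta>))"] by linarith
  finally show ?thesis unfolding s_def .
qed

lemma (in prob_space) prob_space_density_dens_class:
  assumes B: "space M = B" "0 \<le> \<alpha>" and f: "f \<in> dens_class M B \<alpha> \<beta>"
  shows "prob_space (density M (\<lambda>x. ennreal (f x)))"
proof
  have fm: "f \<in> borel_measurable M" using f unfolding dens_class_def by auto
  have "emeasure (density M (\<lambda>x. ennreal (f x))) (space (density M (\<lambda>x. ennreal (f x))))
      = (\<integral>\<^sup>+ x. ennreal (f x) * indicator (space M) x \<partial>M)"
    using fm emeasure_density[of "\<lambda>x. ennreal (f x)" M "space M"] by simp
  also have "\<dots> = (\<integral>\<^sup>+ x. ennreal (f x) \<partial>M)" by (rule nn_integral_cong) auto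
  also have "\<dots> = ennreal (\<integral>x. f x \<partial>M)"
  proof (rule nn_integral_eq_integral)
    show "integrable M f"
      by (rule integrable_bounded_measurable[OF dens_class_bounded_measurable[OF f B(1)]])
    show "AE x in M. 0 \<le> f x"
    proof (rule AE_I2)
      fix x assume "x \<in> space M"
      then have "\<alpha> \<le> f x" using f B unfolding dens_class_def by auto
      then show "0 \<le> f x" using B(2) by linarith
    qed
  qed
  also have "\<dots> = 1" using f unfolding dens_class_def by simp
  finally show "emeasure (density M (\<lambda>x. ennreal (f x))) (space (density M (\<lambda>x. ennreal (f x)))) = 1" .
qed

lemma (in prob_space) nn_integral_density_dens_class:
  assumes B: "space M = B" "0 \<le> \<alpha>" and f: "f \<in> dens_class M B \<alpha> \<beta>"
    and h: "bounded_measurable M h" "\<forall>z\<in>space M. 0 \<le> h z"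
  shows "(\<integral>\<^sup>+ z. ennreal (h z) \<partial>density M (\<lambda>x. ennreal (f x))) = ennreal (\<integral>z. f z * h z \<partial>M)"
proof -
  have f_nonneg: "0 \<le> f z * h z" "0 \<le> f z" if "z \<in> space M" for z
  proof -
    have "\<alpha> \<le> f z" using that f B unfolding dens_class_def by auto
    then show "0 \<le> f z" using B(2) by linarith
    then show "0 \<le> f z * h z" using h(2) that by simp
  qed
  have fb: "bounded_measurable M f" by (rule dens_class_bounded_measurable[OF f B(1)])
  have fm: "f \<in> borel_measurable M" and hm: "h \<in> borel_measurable M"
    using fb h unfolding bounded_measurable_def by auto
  have "(\<integral>\<^sup>+ z. ennreal (h z) \<partial>density M (\<lambda>x. ennreal (f x))) = (\<integral>\<^sup>+ z. ennreal (f z) * ennreal (h z) \<partial>M)"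
    by (rule nn_integral_density) (use fm hm in auto)
  also have "\<dots> = (\<integral>\<^sup>+ z. ennreal (f z * h z) \<partial>M)"
  proof (rule nn_integral_cong)
    fix z assume "z \<in> space M"
    then show "ennreal (f z) * ennreal (h z) = ennreal (f z * h z)"
      using f_nonneg h(2) by (simp add: ennreal_mult)
  qed
  also have "\<dots> = ennreal (\<integral>z. f z * h z \<partial>M)"
    by (rule nn_integral_eq_integral[OF integrable_bounded_measurable[OF bounded_measurable_mult[OF fb h(1)]]])
      (use f_nonneg in \<open>auto intro!: AE_I2\<close>)
  finally show ?thesis .
qed

lemma borel_measurable_prod_coordinates:
  assumes h: "h \<in> borel_measurable D" and I: "I \<subseteq> K"
  shows "(\<lambda>x. \<Prod>i\<in>I. ennreal (h (x i))) \<in> borel_measurable (PiM K (\<lambda>_. D))"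
proof (rule borel_measurable_prod_ennreal)
  fix i assume "i \<in> I"
  then have "i \<in> K" using I by auto
  then show "(\<lambda>x. ennreal (h (x i))) \<in> borel_measurable (PiM K (\<lambda>_. D))"
    using h by measurable
qed

lemma nn_integral_prod_coordinates:
  fixes K :: "'i set"
  assumes D: "prob_space D" and h: "h \<in> borel_measurable D" and I: "I \<subseteq> K" and K: "finite K"
  shows "(\<integral>\<^sup>+ x. (\<Prod>i\<in>I. ennreal (h (x i))) \<partial>PiM K (\<lambda>_. D)) = (\<integral>\<^sup>+ z. ennreal (h z) \<partial>D) ^ card I"
proof -
  interpret product_prob_space "\<lambda>_. D" K by (rule product_prob_spaceI) (rule D)
  define g where "g i z = (if i \<in> I then ennreal (h z) else 1)" for i z
  have restrict: "(\<Prod>i\<in>K. if i \<in> I then a i else 1) = (\<Prod>i\<in>I. a i)" for a :: "'i \<Rightarrow> ennreal"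
    using I K by (simp add: prod.inter_restrict[symmetric] Int_absorb1)
  have "(\<integral>\<^sup>+ x. (\<Prod>i\<in>I. ennreal (h (x i))) \<partial>PiM K (\<lambda>_. D)) = (\<integral>\<^sup>+ x. (\<Prod>i\<in>K. g i (x i)) \<partial>PiM K (\<lambda>_. D))"
  proof (rule nn_integral_cong)
    fix x
    show "(\<Prod>i\<in>I. ennreal (h (x i))) = (\<Prod>i\<in>K. g i (x i))"
      using restrict[of "\<lambda>i. ennreal (h (x i))"] unfolding g_def by simp
  qed
  also have "\<dots> = (\<Prod>i\<in>K. integral\<^sup>N D (g i))"
    by (rule product_nn_integral_prod) (use K h in \<open>auto simp: g_def\<close>)
  also have "\<dots> = (\<Prod>i\<in>K. if i \<in> I then (\<integral>\<^sup>+ z. ennreal (h z) \<partial>D) else 1)"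
    unfolding g_def by (intro prod.cong) (auto simp: prob_space.emeasure_space_1[OF D])
  also have "\<dots> = (\<integral>\<^sup>+ z. ennreal (h z) \<partial>D) ^ card I"
    by (simp add: restrict)
  finally show ?thesis .
qed

definition group_product_sum :: "nat \<Rightarrow> nat \<Rightarrow> (nat \<Rightarrow> nat set) \<Rightarrow> ('a \<Rightarrow> real) \<Rightarrow> (nat \<Rightarrow> 'a) \<Rightarrow> ennreal" where
  "group_product_sum m t G h x = (\<Sum>S\<in>{S. S \<subseteq> {..<m} \<and> card S = t}. \<Prod>i\<in>\<Union>(G ` S). ennreal (h (x i)))"

lemma borel_measurable_group_product_sum:
  assumes "h \<in> borel_measurable D" "\<forall>g<m. G g \<subseteq> K"
  shows "group_product_sum m t G h \<in> borel_measurable (PiM K (\<lambda>_. D))"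
  unfolding group_product_sum_def
  using assms by (intro borel_measurable_sum borel_measurable_prod_coordinates) auto

lemma nn_integral_group_product_sum:
  assumes D: "prob_space D" and h: "h \<in> borel_measurable D" and K: "finite K"
    and disj: "\<forall>i<m. \<forall>j<m. i \<noteq> j \<longrightarrow> G i \<inter> G j = {}" and card: "\<forall>g<m. card (G g) = k" "0 < k"
    and sub: "\<forall>g<m. G g \<subseteq> K"
  shows "(\<integral>\<^sup>+ x. group_product_sum m t G h x \<partial>PiM K (\<lambda>_. D))
      = of_nat (m choose t) * (\<integral>\<^sup>+ z. ennreal (h z) \<partial>D) ^ (k * t)"
proof -
  have "(\<integral>\<^sup>+ x. group_product_sum m t G h x \<partial>PiM K (\<lambda>_. D))
      = (\<Sum>S\<in>{S. S \<subseteq> {..<m} \<and> card S = t}. \<integral>\<^sup>+ x. (\<Prod>i\<in>\<Union>(G ` S). ennreal (h (x i))) \<partial>PiM K (\<lambda>_. D))"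
    unfolding group_product_sum_def
    by (rule nn_integral_sum, rule borel_measurable_prod_coordinates[OF h]) (use sub in auto)
  also have "\<dots> = (\<Sum>S\<in>{S. S \<subseteq> {..<m} \<and> card S = t}. (\<integral>\<^sup>+ z. ennreal (h z) \<partial>D) ^ (k * t))"
  proof (rule sum.cong[OF refl])
    fix S assume S: "S \<in> {S. S \<subseteq> {..<m} \<and> card S = t}"
    then have "finite S" using finite_subset by blast
    moreover have "\<forall>g\<in>S. finite (G g)" using S card by (auto intro: card_ge_0_finite)
    ultimately have "card (\<Union>(G ` S)) = (\<Sum>g\<in>S. card (G g))"
      using S disj by (intro card_UN_disjoint) auto
    also have "\<dots> = (\<Sum>g\<in>S. k)" using S card by (intro sum.cong) auto
    also have "\<dots> = k * t" using S by simp
    finally show "(\<integral>\<^sup>+ x. (\<Prod>i\<in>\<Union>(G ` S). ennreal (h (x i))) \<partial>PiM K (\<lambda>_. D))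
        = (\<integral>\<^sup>+ z. ennreal (h z) \<partial>D) ^ (k * t)"
      using nn_integral_prod_coordinates[OF D h _ K, of "\<Union>(G ` S)"] S sub by auto
  qed
  also have "\<dots> = of_nat (m choose t) * (\<integral>\<^sup>+ z. ennreal (h z) \<partial>D) ^ (k * t)"
    using n_subsets[of "{..<m}" t] by simp
  finally show ?thesis .
qed

lemma prod_sqrt_ratio_ge_1:
  assumes pos: "\<forall>i\<in>I. 0 < u (x i) \<and> 0 < v (x i)" and "\<not> (0 < (\<Sum>i\<in>I. ln (u (x i) / v (x i))))"
  shows "1 \<le> (\<Prod>i\<in>I. sqrt (v (x i) / u (x i)))"
proof -
  have "(\<Prod>i\<in>I. sqrt (v (x i) / u (x i))) = (\<Prod>i\<in>I. exp (- ln (u (x i) / v (x i)) / 2))"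
  proof (rule prod.cong)
    fix i assume "i \<in> I"
    then have "0 < u (x i)" "0 < v (x i)" using pos by auto
    then have "sqrt (v (x i) / u (x i)) = exp (ln (v (x i) / u (x i)) / 2)"
      by (simp add: powr_half_sqrt[symmetric] powr_def)
    also have "ln (v (x i) / u (x i)) = - ln (u (x i) / v (x i))"
      using \<open>0 < u (x i)\<close> \<open>0 < v (x i)\<close> by (simp add: ln_div)
    finally show "sqrt (v (x i) / u (x i)) = exp (- ln (u (x i) / v (x i)) / 2)" .
  qed simp
  also have "\<dots> = exp (\<Sum>i\<in>I. - ln (u (x i) / v (x i)) / 2)"
    by (cases "finite I") (simp_all add: exp_sum)
  also have "(\<Sum>i\<in>I. - ln (u (x i) / v (x i)) / 2) = - (\<Sum>i\<in>I. ln (u (x i) / v (x i))) / 2"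
    by (simp add: sum_negf sum_divide_distrib)
  finally show ?thesis using assms(2) by simp
qed

lemma one_le_group_product_sum:
  assumes disj: "\<forall>i<m. \<forall>j<m. i \<noteq> j \<longrightarrow> G i \<inter> G j = {}" and fin: "\<forall>g<m. finite (G g)"
    and pos: "\<forall>g<m. \<forall>i\<in>G g. 0 < u (x i) \<and> 0 < v (x i)"
    and bad: "t \<le> card {g\<in>{..<m}. \<not> group_prefers G x u v g}"
  shows "1 \<le> group_product_sum m t G (\<lambda>z. sqrt (v z / u z)) x"
proof -
  obtain S where S: "S \<subseteq> {g\<in>{..<m}. \<not> group_prefers G x u v g}" "card S = t" "finite S"
    using obtain_subset_with_card_n[OF bad] by blast
  have Sm: "S \<subseteq> {..<m}" using S by auto
  have nonneg: "0 \<le> sqrt (v (x i) / u (x i))" if "g \<in> S" "i \<in> G g" for g i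
  proof -
    have "g < m" using Sm that(1) by auto
    then have "0 < u (x i)" "0 < v (x i)" using pos that(2) by auto
    then show ?thesis by simp
  qed
  have "(1::real) \<le> (\<Prod>g\<in>S. \<Prod>i\<in>G g. sqrt (v (x i) / u (x i)))" (is "1 \<le> ?P")
  proof (rule prod_ge_1)
    fix g assume "g \<in> S"
    then have "g < m" "\<not> group_prefers G x u v g" using S by auto
    then show "1 \<le> (\<Prod>i\<in>G g. sqrt (v (x i) / u (x i)))"
      using prod_sqrt_ratio_ge_1[of "G g" u x v] pos unfolding group_prefers_def by auto
  qed
  then have "1 \<le> ennreal ?P" by (simp add: ennreal_leI)
  also have "ennreal ?P = (\<Prod>g\<in>S. \<Prod>i\<in>G g. ennreal (sqrt (v (x i) / u (x i))))"
    using nonneg by (simp add: prod_ennreal prod_nonneg)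
  also have "\<dots> = (\<Prod>i\<in>\<Union>(G ` S). ennreal (sqrt (v (x i) / u (x i))))"
    using S(3) by (rule prod.UNION_disjoint[symmetric]) (use Sm fin disj in blast)+
  also have "\<dots> \<le> group_product_sum m t G (\<lambda>z. sqrt (v z / u z)) x"
    unfolding group_product_sum_def using S Sm
    by (intro member_le_sum[of S]) (auto intro: finite_subset[of _ "Pow {..<m}"])
  finally show ?thesis .
qed

lemma card_groups_touched_le:
  fixes m N :: nat and G :: "nat \<Rightarrow> nat set"
  assumes disj: "\<forall>i<m. \<forall>j<m. i \<noteq> j \<longrightarrow> G i \<inter> G j = {}" and groups: "\<forall>g<m. G g \<subseteq> {..<N}"
  shows "card {g\<in>{..<m}. \<exists>i\<in>G g. Y i \<noteq> x i} \<le> card {i\<in>{..<N}. Y i \<noteq> x i}"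
proof -
  define Cor where "Cor = {g\<in>{..<m}. \<exists>i\<in>G g. Y i \<noteq> x i}"
  define pick where "pick g = (SOME i. i \<in> G g \<and> Y i \<noteq> x i)" for g
  have pick: "pick g \<in> G g" "Y (pick g) \<noteq> x (pick g)" if "g \<in> Cor" for g
    using that someI_ex[of "\<lambda>i. i \<in> G g \<and> Y i \<noteq> x i"] unfolding Cor_def pick_def by auto
  have "inj_on pick Cor"
  proof
    fix g1 g2 assume g: "g1 \<in> Cor" "g2 \<in> Cor" "pick g1 = pick g2"
    have "pick g1 \<in> G g1" "pick g2 \<in> G g2" using pick(1) g(1,2) by auto
    then have "pick g1 \<in> G g1 \<inter> G g2" using g(3) by simp
    then show "g1 = g2" using disj g(1,2) unfolding Cor_def by blast
  qed
  moreover have "pick ` Cor \<subseteq> {i\<in>{..<N}. Y i \<noteq> x i}"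
    using pick groups unfolding Cor_def by auto
  ultimately show ?thesis unfolding Cor_def[symmetric] by (rule card_inj_on_le) simp
qed

text \<open>Each corrupted observation lies in a single group, so at most \<open>\<epsilon> N = m / 3\<close> of the \<open>m\<close>
  groups see corrupted data; at most \<open>m / 2\<close> groups prefer \<open>u\<close> on the corrupted sample, so on the
  clean sample at least \<open>m / 6\<close> groups do not.\<close>

lemma card_groups_not_preferring_ge:
  fixes N k :: nat and \<epsilon> :: real
  assumes k: "0 < k" "k dvd N" and eps: "0 < \<epsilon>" "real k = 1 / (3 * \<epsilon>)"
    and disj: "\<forall>i<N div k. \<forall>j<N div k. i \<noteq> j \<longrightarrow> G i \<inter> G j = {}"
    and groups: "\<forall>g<N div k. G g \<subseteq> {..<N}"
    and corrupt: "real (card {i\<in>{..<N}. Y i \<noteq> x i}) \<le> \<epsilon> * real N"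
    and no_majority: "\<not> majority_prefers N k G Y u v"
  shows "real (N div k) / 6 \<le> real (card {g\<in>{..<N div k}. \<not> group_prefers G x u v g})"
proof -
  define m where "m = N div k"
  have m: "real m = real N / real k" unfolding m_def using k by (simp add: real_of_nat_div)
  have em: "\<epsilon> * real N = real m / 3" using m eps by (simp add: field_simps)
  define Cor where "Cor = {g\<in>{..<m}. \<exists>i\<in>G g. Y i \<noteq> x i}"
  have "card Cor \<le> card {i\<in>{..<N}. Y i \<noteq> x i}"
    unfolding Cor_def m_def by (rule card_groups_touched_le[OF disj groups])
  then have cor: "real (card Cor) \<le> real m / 3" using corrupt em by linarith
  define A where "A = {g\<in>{..<m}. group_prefers G Y u v g}"
  define A' where "A' = {g\<in>{..<m}. \<not> group_prefers G x u v g}"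
  have "{..<m} \<subseteq> Cor \<union> A \<union> A'"
  proof
    fix g assume g: "g \<in> {..<m}"
    show "g \<in> Cor \<union> A \<union> A'"
    proof (cases "g \<in> Cor \<or> \<not> group_prefers G x u v g")
      case False
      then have "\<forall>i\<in>G g. Y i = x i" "group_prefers G x u v g" using g unfolding Cor_def by auto
      then have "group_prefers G Y u v g" unfolding group_prefers_def by simp
      then show ?thesis using g unfolding A_def by auto
    qed (use g in \<open>auto simp: A'_def\<close>)
  qed
  then have "m \<le> card (Cor \<union> A \<union> A')"
    using card_mono[of "Cor \<union> A \<union> A'" "{..<m}"] unfolding Cor_def A_def A'_def by auto
  also have "\<dots> \<le> card Cor + card A + card A'" by (meson add_le_mono card_Un_le le_refl order_trans)
  finally have "real m \<le> real (card Cor) + real (card A) + real (card A')" by linarith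
  moreover have "real (card A) \<le> real N / (2 * real k)"
    using no_majority unfolding majority_prefers_def A_def m_def by simp
  moreover have "real N / (2 * real k) = real m / 2" using m by simp
  ultimately show ?thesis using cor unfolding A'_def m_def by linarith
qed

lemma (in prob_space) nn_integral_sqrt_ratio_density_le:
  assumes B: "space M = B" and "0 < \<alpha>" and C: "8 * \<beta> + 2 * \<beta> / \<alpha>\<^sup>2 \<le> C" and "0 \<le> \<delta>"
    and f: "f \<in> dens_class M B \<alpha> \<beta>" and u: "u \<in> dens_class M B \<alpha> \<beta>" and v: "v \<in> dens_class M B \<alpha> \<beta>"
    and near: "L2dist M u f \<le> \<delta>" and far: "C * \<delta> \<le> L2dist M u v"
  shows "(\<integral>\<^sup>+ z. ennreal (sqrt (v z / u z)) \<partial>density M (\<lambda>x. ennreal (f x)))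
    \<le> ennreal (exp (- ((C * \<delta>)\<^sup>2 / (16 * \<beta>))))"
proof -
  have "0 \<le> sqrt (v z / u z)" if "z \<in> space M" for z
  proof -
    have "\<alpha> \<le> u z" "\<alpha> \<le> v z" using that u v B unfolding dens_class_def by auto
    then show ?thesis using \<open>0 < \<alpha>\<close> by simp
  qed
  then have "(\<integral>\<^sup>+ z. ennreal (sqrt (v z / u z)) \<partial>density M (\<lambda>x. ennreal (f x)))
      = ennreal (\<integral>z. f z * sqrt (v z / u z) \<partial>M)"
    using \<open>0 < \<alpha>\<close> by (intro nn_integral_density_dens_class[OF B _ f]
        bounded_measurable_sqrt_ratio[OF B \<open>0 < \<alpha>\<close> u v]) auto
  also have "\<dots> \<le> ennreal (exp (- ((L2dist M u v)\<^sup>2 / (16 * \<beta>))))"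
    by (rule ennreal_leI, rule affinity_le_exp[OF B \<open>0 < \<alpha>\<close> C \<open>0 \<le> \<delta>\<close> f u v near far])
  also have "\<dots> \<le> ennreal (exp (- ((C * \<delta>)\<^sup>2 / (16 * \<beta>))))"
  proof -
    obtain z where "z \<in> space M" using not_empty by blast
    then have "0 < \<beta>" using f B \<open>0 < \<alpha>\<close> unfolding dens_class_def by force
    moreover have "0 \<le> 2 * \<beta> / \<alpha>\<^sup>2" using \<open>0 < \<beta>\<close> by simp
    ultimately have "0 \<le> C" using C by linarith
    then have "0 \<le> C * \<delta>" using \<open>0 \<le> \<delta>\<close> by simp
    then have "(C * \<delta>)\<^sup>2 \<le> (L2dist M u v)\<^sup>2"
      using far by (intro power_mono) auto
    then show ?thesis using \<open>0 < \<beta>\<close> by (intro ennreal_leI) (simp add: divide_right_mono)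
  qed
  finally show ?thesis .
qed

lemma binomial_mult_exp_power_le:
  fixes a X :: real and m t n :: nat
  assumes "real m * ln 2 \<le> X" "2 * X \<le> real n * a"
  shows "real (m choose t) * exp (- a) ^ n \<le> exp (- X)"
proof -
  have "real (m choose t) \<le> 2 ^ m" using binomial_le_pow2[of m t] by (simp flip: of_nat_power)
  also have "(2::real) ^ m = exp (ln 2) ^ m" by simp
  also have "\<dots> = exp (real m * ln 2)" by (rule exp_of_nat_mult[symmetric])
  also have "\<dots> \<le> exp X" using assms(1) by simp
  finally have "real (m choose t) \<le> exp X" .
  moreover have "exp (- a) ^ n \<le> exp (- (2 * X))"
    using assms(2) by (simp flip: exp_of_nat_mult)
  ultimately have "real (m choose t) * exp (- a) ^ n \<le> exp X * exp (- (2 * X))"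
    by (intro mult_mono) simp_all
  also have "\<dots> = exp (- X)" by (simp flip: exp_add)
  finally show ?thesis .
qed

text \<open>There are at most \<open>2^m \<le> exp X\<close> subsets of groups, while each product has expectation at
  most \<open>exp (- 2 X)\<close>, where \<open>X = N C\<^sup>2 \<delta>\<^sup>2 / (192 \<beta>)\<close>.\<close>

lemma (in prob_space) nn_integral_group_product_sum_le:
  fixes m t N k :: nat
  assumes B: "space M = B" and "0 < \<alpha>" and C: "8 * \<beta> + 2 * \<beta> / \<alpha>\<^sup>2 \<le> C" and "0 \<le> \<delta>"
    and f: "f \<in> dens_class M B \<alpha> \<beta>" and u: "u \<in> dens_class M B \<alpha> \<beta>" and v: "v \<in> dens_class M B \<alpha> \<beta>"
    and near: "L2dist M u f \<le> \<delta>" and far: "C * \<delta> \<le> L2dist M u v"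
    and disj: "\<forall>i<m. \<forall>j<m. i \<noteq> j \<longrightarrow> G i \<inter> G j = {}" and card: "\<forall>g<m. card (G g) = k" "0 < k"
    and sub: "\<forall>g<m. G g \<subseteq> {..<N}" and mk: "m * k = N"
    and cond: "real m * ln 2 \<le> real N * C\<^sup>2 * \<delta>\<^sup>2 / (192 * \<beta>)"
    and t: "real m / 6 \<le> real t"
  shows "(\<integral>\<^sup>+ x. group_product_sum m t G (\<lambda>z. sqrt (v z / u z)) x \<partial>PiM {..<N} (\<lambda>_. density M (\<lambda>x. ennreal (f x))))
    \<le> ennreal (exp (- (real N * C\<^sup>2 * \<delta>\<^sup>2 / (192 * \<beta>))))"
proof -
  define X where "X = real N * C\<^sup>2 * \<delta>\<^sup>2 / (192 * \<beta>)"
  define D where "D = density M (\<lambda>x. ennreal (f x))"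
  have D: "prob_space D" unfolding D_def using \<open>0 < \<alpha>\<close>
    by (intro prob_space_density_dens_class[OF B _ f]) simp
  have h: "(\<lambda>z. sqrt (v z / u z)) \<in> borel_measurable D"
    using bounded_measurable_sqrt_ratio[OF B \<open>0 < \<alpha>\<close> u v]
    unfolding D_def bounded_measurable_def by (simp cong: measurable_cong_sets)
  have "2 * X = real N / 6 * ((C * \<delta>)\<^sup>2 / (16 * \<beta>))"
    unfolding X_def by (simp add: power_mult_distrib)
  also have "\<dots> \<le> real (k * t) * ((C * \<delta>)\<^sup>2 / (16 * \<beta>))"
  proof (rule mult_right_mono)
    have "real N / 6 = real k * (real m / 6)" using mk by (simp add: mult.commute flip: of_nat_mult)
    also have "\<dots> \<le> real k * real t" using t by (intro mult_left_mono) auto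
    finally show "real N / 6 \<le> real (k * t)" by simp
    obtain z where "z \<in> space M" using not_empty by blast
    then have "0 < \<beta>" using f B \<open>0 < \<alpha>\<close> unfolding dens_class_def by force
    then show "0 \<le> (C * \<delta>)\<^sup>2 / (16 * \<beta>)" by simp
  qed
  finally have bound: "real (m choose t) * exp (- ((C * \<delta>)\<^sup>2 / (16 * \<beta>))) ^ (k * t) \<le> exp (- X)"
    by (rule binomial_mult_exp_power_le[OF cond[folded X_def]])
  have "(\<integral>\<^sup>+ x. group_product_sum m t G (\<lambda>z. sqrt (v z / u z)) x \<partial>PiM {..<N} (\<lambda>_. D))
      = of_nat (m choose t) * (\<integral>\<^sup>+ z. ennreal (sqrt (v z / u z)) \<partial>D) ^ (k * t)"
    by (rule nn_integral_group_product_sum[OF D h _ disj card sub]) simp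
  also have "\<dots> \<le> of_nat (m choose t) * ennreal (exp (- ((C * \<delta>)\<^sup>2 / (16 * \<beta>)))) ^ (k * t)"
    unfolding D_def
    by (intro mult_left_mono power_mono nn_integral_sqrt_ratio_density_le[OF B \<open>0 < \<alpha>\<close> C \<open>0 \<le> \<delta>\<close> f u v near far])
      simp_all
  also have "\<dots> = ennreal (real (m choose t) * exp (- ((C * \<delta>)\<^sup>2 / (16 * \<beta>))) ^ (k * t))"
    by (simp add: ennreal_power ennreal_mult' ennreal_of_nat_eq_real_of_nat)
  also have "\<dots> \<le> ennreal (exp (- X))" using bound by (rule ennreal_leI)
  finally show ?thesis unfolding D_def X_def .
qed

section \<open>The constants\<close>

lemma cab_pos:
  assumes "0 < \<alpha>" "\<alpha> < \<beta>"
  shows "0 < cab \<alpha> \<beta>"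
proof -
  have "1 < \<beta> / \<alpha>" using assms by simp
  then have "ln (\<beta> / \<alpha>) < \<beta> / \<alpha> - 1"
    using ln_le_minus_one[of "\<beta> / \<alpha>"] ln_eq_minus_one[of "\<beta> / \<alpha>"] by fastforce
  then show ?thesis unfolding cab_def hfun_def using assms by simp
qed

lemma C10_pos:
  assumes "0 < \<alpha>" "\<alpha> < \<beta>" "\<phi> < 3/2" and C: "1 + sqrt (1/\<alpha>) / sqrt (cab \<alpha> \<beta>) < C"
  shows "0 < C10 \<alpha> \<beta> C \<phi>"
proof -
  have c: "0 < cab \<alpha> \<beta>" using cab_pos assms(1,2) .
  then have "sqrt (1/\<alpha>) < sqrt (cab \<alpha> \<beta>) * (C - 1)"
    using C by (simp add: field_simps)
  moreover have "0 < Kab \<alpha> \<beta>" "0 < ln (\<beta> / \<alpha>)" unfolding Kab_def using assms c by auto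
  ultimately have "0 < Lfun \<alpha> \<beta> C" unfolding Lfun_def by (intro divide_pos_pos) auto
  then show ?thesis unfolding C10_def using assms(3) by simp
qed

lemma tauJ_sq:
  assumes "0 < C10'" "1 \<le> J"
  shows "(tauJ C10' (c / 2 - 1) d J)\<^sup>2 = 4 * C10' * d\<^sup>2 / (4^(J - 1) * c\<^sup>2)"
proof -
  have "tauJ C10' (c / 2 - 1) d J = sqrt C10' * d / (2^(J - 1) * (c / 2))" unfolding tauJ_def by simp
  then have "(tauJ C10' (c / 2 - 1) d J)\<^sup>2 = (sqrt C10')\<^sup>2 * d\<^sup>2 / ((2^(J - 1))\<^sup>2 * (c / 2)\<^sup>2)"
    by (simp add: power_divide power_mult_distrib)
  also have "(sqrt C10')\<^sup>2 = C10'" using assms(1) by simp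
  also have "((2::real)^(J - 1))\<^sup>2 = 4^(J - 1)" by (rule power2_two_pow)
  finally show ?thesis by (simp add: power_divide field_simps)
qed

lemma tauJ_scale:
  assumes "0 < c" "0 < C10'" "2 \<le> J"
  shows "tauJ C10' (c / 2 - 1) d J * c / sqrt C10' = d / 2^(J - 2)"
proof -
  have "tauJ C10' (c / 2 - 1) d J * c / sqrt C10' = sqrt C10' * d / (2^(J - 1) * (c / 2)) * c / sqrt C10'"
    unfolding tauJ_def by simp
  also have "\<dots> = d / 2^(J - 2)"
    unfolding power_pred_eq[OF assms(3)] using assms(1,2) by (simp add: field_simps)
  finally show ?thesis .
qed

lemma level_weight_eq_tauJ:
  assumes "0 < c" "0 < C10'" "2 \<le> j" "j \<le> J"
  shows "d\<^sup>2 / 4^(j - 2) = c\<^sup>2 / C10' * (tauJ C10' (c / 2 - 1) d J)\<^sup>2 * 4^(J - j)"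
proof -
  have "c\<^sup>2 / C10' * (tauJ C10' (c / 2 - 1) d J)\<^sup>2 * 4^(J - j)
      = c\<^sup>2 / C10' * (4 * C10' * d\<^sup>2 / (4^(J - 1) * c\<^sup>2)) * 4^(J - j)"
    using assms by (simp add: tauJ_sq)
  also have "\<dots> = 4 * d\<^sup>2 * 4^(J - j) / 4^(J - 1)" using assms(1,2) by (simp add: field_simps)
  also have "(4::real)^(J - 1) = 4 * (4^(j - 2) * 4^(J - j))"
    using assms(3,4) power_pred_eq[of J "4::real"] by (simp flip: power_add)
  also have "4 * d\<^sup>2 * 4^(J - j) / (4 * (4^(j - 2) * 4^(J - j))) = d\<^sup>2 / 4^(j - 2)"
    by (simp add: field_simps)
  finally show ?thesis ..
qed

lemma level_scale_sq_eq_tauJ: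
  assumes "0 < c" "0 < C10'" "2 \<le> j" "j \<le> J"
  shows "(d / (2^(j - 2) * c))\<^sup>2 = (tauJ C10' (c / 2 - 1) d J)\<^sup>2 * 4^(J - j) / C10'"
proof -
  have "(d / (2^(j - 2) * c))\<^sup>2 = d\<^sup>2 / 4^(j - 2) / c\<^sup>2"
    using power2_two_pow[of "j - 2"] by (simp add: power_divide power_mult_distrib)
  also have "\<dots> = c\<^sup>2 / C10' * (tauJ C10' (c / 2 - 1) d J)\<^sup>2 * 4^(J - j) / c\<^sup>2"
    unfolding level_weight_eq_tauJ[OF assms] ..
  also have "\<dots> = (tauJ C10' (c / 2 - 1) d J)\<^sup>2 * 4^(J - j) / C10'" using assms(1) by (simp add: field_simps)
  finally show ?thesis .
qed

lemma exp_neg_le_inverse_sq: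
  fixes y :: real
  assumes "0 < y"
  shows "exp (- y) \<le> 4 / y\<^sup>2"
proof -
  have "y / 2 \<le> exp (y / 2)" using exp_ge_add_one_self[of "y / 2"] by linarith
  then have "(y / 2)\<^sup>2 \<le> (exp (y / 2))\<^sup>2"
    using assms by (intro power_mono) auto
  also have "(exp (y / 2))\<^sup>2 = exp y" by (simp flip: exp_of_nat_mult)
  finally have "y\<^sup>2 / 4 \<le> exp y" by (simp add: power_divide)
  then show ?thesis using assms by (simp add: exp_minus field_simps)
qed

lemma exp_term_le_geometric:
  fixes b x M :: real
  assumes "r \<le> s" "1 \<le> b * 4^r" "ln 2 < x" "0 \<le> M" "M \<le> exp (x / 2)"
  shows "4^s * (M * exp (- (b * x * 4^s))) \<le> 64 * 4^r / 4^(s - r)"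
proof -
  define P :: real where "P = 4^(s - r)"
  have "1 \<le> P" unfolding P_def by simp
  have s: "(4::real)^s = 4^r * P" unfolding P_def using assms(1) by (simp flip: power_add)
  have "1/2 < x" using assms(3) ln_le_minus_one[of "1/2"] by (simp add: ln_div)
  have "P \<le> b * 4^s" using assms(2) \<open>1 \<le> P\<close> unfolding s
    by (metis mult.assoc mult_1 mult_right_mono zero_le_one order_trans)
  then have "x * P \<le> b * x * 4^s" using \<open>1/2 < x\<close>
    by (simp add: mult_left_mono mult.commute mult.left_commute)
  have "M * exp (- (b * x * 4^s)) \<le> exp (x / 2) * exp (- (b * x * 4^s))"
    using assms(4,5) by (intro mult_right_mono) auto
  also have "\<dots> = exp (x / 2 - b * x * 4^s)" by (simp flip: exp_add)
  also have "\<dots> \<le> exp (- (x * P / 2))"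
  proof -
    have "x / 2 \<le> x * P / 2" using \<open>1 \<le> P\<close> \<open>1/2 < x\<close> by simp
    then show ?thesis using \<open>x * P \<le> b * x * 4^s\<close> by (subst exp_le_cancel_iff) linarith
  qed
  also have "\<dots> \<le> 4 / (x * P / 2)\<^sup>2"
    using \<open>1 \<le> P\<close> \<open>1/2 < x\<close> by (intro exp_neg_le_inverse_sq) simp
  also have "\<dots> \<le> 64 / P\<^sup>2"
  proof -
    have "1/4 \<le> x\<^sup>2" using power_mono[of "1/2" x 2] \<open>1/2 < x\<close> by (simp add: power_divide)
    then have "16 / x\<^sup>2 \<le> 64" by (simp add: divide_le_eq)
    moreover have "4 / (x * P / 2)\<^sup>2 = (16 / x\<^sup>2) / P\<^sup>2"
      by (simp add: power_mult_distrib power_divide)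
    ultimately show ?thesis by (metis divide_right_mono zero_le_power2)
  qed
  finally have "4^s * (M * exp (- (b * x * 4^s))) \<le> 4^r * P * (64 / P\<^sup>2)"
    unfolding s using \<open>1 \<le> P\<close> by (intro mult_left_mono) simp_all
  also have "\<dots> = 64 * 4^r / 4^(s - r)"
    using \<open>1 \<le> P\<close> unfolding P_def by (simp add: power2_eq_square)
  finally show ?thesis .
qed

lemma exp_sum_le_geometric:
  fixes b x M :: real
  assumes "J1 + r \<le> J" "1 \<le> b * 4^r" "ln 2 < x" "0 \<le> M" "M \<le> exp (x / 2)"
  shows "(\<Sum>j\<in>{2..J1}. 4^(J - j) * (M * exp (- (b * x * 4^(J - j))))) \<le> 100 * 4^r"
proof -
  have "(\<Sum>j\<in>{2..J1}. 4^(J - j) * (M * exp (- (b * x * 4^(J - j)))))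
      \<le> (\<Sum>j\<in>{2..J1}. 64 * 4^r * (1/4)^(J1 - j))"
  proof (rule sum_mono)
    fix j assume j: "j \<in> {2..J1}"
    then have "4^(J - j) * (M * exp (- (b * x * 4^(J - j)))) \<le> 64 * 4^r / 4^(J - j - r)"
      using assms by (intro exp_term_le_geometric) auto
    also have "\<dots> \<le> 64 * 4^r / 4^(J1 - j)"
      using j assms(1) by (intro divide_left_mono power_increasing) auto
    finally show "4^(J - j) * (M * exp (- (b * x * 4^(J - j)))) \<le> 64 * 4^r * (1/4)^(J1 - j)"
      by (simp add: power_one_over)
  qed
  also have "\<dots> = 64 * 4^r * (\<Sum>j\<in>{2..J1}. (1/4)^(J1 - j))"
    by (simp add: sum_distrib_left)
  also have "\<dots> \<le> 64 * 4^r * (4/3)"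
  proof -
    have "(\<Sum>j\<in>{2..J1}. (1/4::real)^(J1 - j)) = (\<Sum>i\<in>(\<lambda>j. J1 - j) ` {2..J1}. (1/4)^i)"
      by (subst sum.reindex) (auto simp: inj_on_def)
    also have "\<dots> < 4/3" using geometric_sum_less[of "1/4::real" "(\<lambda>j. J1 - j) ` {2..J1}"] by simp
    finally show ?thesis by simp
  qed
  also have "\<dots> \<le> 100 * 4^r" by simp
  finally show ?thesis .
qed

section \<open>The risk bound\<close>

lemma outer_exp_le_nn_integral:
  assumes "g \<in> borel_measurable M" "\<forall>x\<in>space M. ennreal (h x) \<le> g x"
  shows "outer_exp M h \<le> (\<integral>\<^sup>+ x. g x \<partial>M)"
  unfolding outer_exp_def using assms by (intro INF_lower) auto

locale robust_risk = multiscale_tree +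
  fixes f :: "'a \<Rightarrow> real" and N k :: nat and \<epsilon> :: real and G :: "nat \<Rightarrow> nat set"
    and A :: "(nat \<Rightarrow> 'a) \<Rightarrow> nat \<Rightarrow> 'a" and est :: "(nat \<Rightarrow> 'a) \<Rightarrow> nat \<Rightarrow> 'a \<Rightarrow> real" and J1 M :: nat
  assumes f_in: "f \<in> F" and alpha_pos: "0 < \<alpha>" and c_ge: "4 \<le> c" and d_pos: "0 < d"
    and J1: "1 \<le> J1" "J1 \<le> Jt"
    and entropy_le: "\<And>j. 2 \<le> j \<Longrightarrow> j \<le> J1 \<Longrightarrow> loc_entropy \<mu> F (d / 2^(j - 2)) (2 * c) \<noteq> \<infinity> \<and>
                        the_enat (loc_entropy \<mu> F (d / 2^(j - 2)) (2 * c)) \<le> M"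
    and k: "0 < k" "k dvd N" and eps: "0 < \<epsilon>" "real k = 1 / (3 * \<epsilon>)"
    and groups_cover: "(\<Union>j<N div k. G j) = {..<N}" and groups_card: "\<forall>j<N div k. card (G j) = k"
    and groups_disjoint: "\<forall>i<N div k. \<forall>j<N div k. i \<noteq> j \<longrightarrow> G i \<inter> G j = {}"
    and corruption: "\<forall>x\<in>space (PiM {..<N} (\<lambda>_. density \<mu> (\<lambda>x. ennreal (f x)))). (\<forall>i<N. A x i \<in> B) \<and>
              real (card {i\<in>{..<N}. A x i \<noteq> x i}) \<le> \<epsilon> * real N"
    and estimator: "\<forall>X. (\<forall>i<N. X i \<in> B) \<longrightarrow> estimator_path \<mu> N k G (c / 2 - 1) c d Jt \<nu>1 off X (est X)"
    and C_large: "8 * \<beta> + 2 * \<beta> / \<alpha>\<^sup>2 \<le> c / 2 - 1"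
    and scales_large: "\<forall>j\<in>{2..J1}. 3 * \<epsilon> * ln 2 \<le> (c / 2 - 1)\<^sup>2 * (d / (2^(j - 2) * c))\<^sup>2 / (192 * \<beta>)"
begin

abbreviation "P \<equiv> PiM {..<N} (\<lambda>_. density \<mu> (\<lambda>x. ennreal (f x)))"
abbreviation "m \<equiv> N div k"

definition near_nodes :: "nat \<Rightarrow> ('a \<Rightarrow> real) set" where
  "near_nodes j = Lv (j - 1) \<inter> L2ball \<mu> f (d / 2^(j - 2))"

definition far_offspring :: "nat \<Rightarrow> ('a \<Rightarrow> real) \<Rightarrow> ('a \<Rightarrow> real) set" where
  "far_offspring j q = {v\<in>off j q. (c / 2 - 1) * (d / (2^(j - 2) * c)) \<le> L2dist \<mu> (near_offspring \<mu> off d c f j q) v}"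

text \<open>A majorant of the indicator of \<open>comparison_fails j\<close>: whenever \<open>u\<close> loses a comparison,
  at least a sixth of the groups vote against it, hence subsets of \<open>\<lceil>m / 6\<rceil>\<close> groups.\<close>

definition level_majorant :: "nat \<Rightarrow> (nat \<Rightarrow> 'a) \<Rightarrow> ennreal" where
  "level_majorant j x = (\<Sum>q\<in>near_nodes j. \<Sum>v\<in>far_offspring j q.
    group_product_sum m (nat \<lceil>real m / 6\<rceil>) G (\<lambda>z. sqrt (v z / near_offspring \<mu> off d c f j q z)) x)"

definition risk_majorant :: "(nat \<Rightarrow> 'a) \<Rightarrow> ennreal" where
  "risk_majorant x = ennreal (25 * d\<^sup>2 / 4^(J1 - 1)) +
    (\<Sum>j\<in>{2..J1}. ennreal (25 * d\<^sup>2 / 4^(j - 2)) * level_majorant j x)"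

lemma groups_in: "\<forall>g<m. G g \<subseteq> {..<N}"
  using groups_cover by blast

lemma near_nodes:
  assumes "2 \<le> j" "j \<le> J1"
  shows "finite (near_nodes j)" "card (near_nodes j) \<le> M"
  using card_level_near_le[OF assms(1) _ f_in] entropy_le[OF assms] assms J1
  unfolding near_nodes_def by fastforce+

lemma near_node_offspring:
  assumes j: "2 \<le> j" "j \<le> J1" and q: "q \<in> near_nodes j"
  shows "near_offspring \<mu> off d c f j q \<in> F"
    "L2dist \<mu> (near_offspring \<mu> off d c f j q) f \<le> d / (2^(j - 2) * c)"
    "finite (far_offspring j q)" "card (far_offspring j q) \<le> M" "far_offspring j q \<subseteq> F"
proof -
  have jt: "j \<le> Jt" using j J1 by simp
  have q': "q \<in> Lv (j - 1)" "L2dist \<mu> q f \<le> d / 2^(j - 2)"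
    using q unfolding near_nodes_def L2ball_def by (auto simp: L2dist_commute)
  note u = near_offspring[OF j(1) jt q'(1) f_in q'(2)]
  note off = card_offspring_le[OF j(1) jt q'(1)] offspring_subset_F[OF j(1) jt q'(1)]
  have sub: "far_offspring j q \<subseteq> off j q" unfolding far_offspring_def by auto
  show "near_offspring \<mu> off d c f j q \<in> F" using u(1) off(3) by auto
  show "L2dist \<mu> (near_offspring \<mu> off d c f j q) f \<le> d / (2^(j - 2) * c)" by (rule u(2))
  show "finite (far_offspring j q)" using off(1) entropy_le[OF j] sub by (blast intro: finite_subset)
  show "card (far_offspring j q) \<le> M"
    using off entropy_le[OF j] sub card_mono by (metis le_trans)
  show "far_offspring j q \<subseteq> F" using sub off(3) by auto
qed

lemma sample_in: "x \<in> space P \<Longrightarrow> i < N \<Longrightarrow> x i \<in> B"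
  using space_eq by (auto simp: space_PiM PiE_def Pi_def)

lemma one_le_level_majorant:
  assumes x: "x \<in> space P" and j: "2 \<le> j" "j \<le> J1" and q: "q \<in> near_nodes j"
    and v: "v \<in> far_offspring j q"
    and lost: "\<not> majority_prefers N k G (A x) (near_offspring \<mu> off d c f j q) v"
  shows "1 \<le> level_majorant j x"
proof -
  define u where "u = near_offspring \<mu> off d c f j q"
  note props = near_node_offspring[OF j q]
  have "real m / 6 \<le> real (card {g\<in>{..<m}. \<not> group_prefers G x u v g})"
    using card_groups_not_preferring_ge[OF k eps groups_disjoint groups_in _ lost[folded u_def]]
      corruption x by blast
  then have t: "nat \<lceil>real m / 6\<rceil> \<le> card {g\<in>{..<m}. \<not> group_prefers G x u v g}"
    by (simp add: nat_le_iff ceiling_le_iff)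
  have "\<forall>g<m. \<forall>i\<in>G g. 0 < u (x i) \<and> 0 < v (x i)"
  proof (intro allI impI ballI)
    fix g i assume "g < m" "i \<in> G g"
    then have "x i \<in> B" using groups_in sample_in[OF x] by auto
    moreover have "u \<in> dens_class \<mu> B \<alpha> \<beta>" "v \<in> dens_class \<mu> B \<alpha> \<beta>"
      using props(1,5) v F_dens unfolding u_def by auto
    ultimately show "0 < u (x i) \<and> 0 < v (x i)"
      using alpha_pos unfolding dens_class_def by (auto intro: less_le_trans)
  qed
  moreover have "\<forall>g<m. finite (G g)" using groups_card k by (metis card_ge_0_finite)
  ultimately have "1 \<le> group_product_sum m (nat \<lceil>real m / 6\<rceil>) G (\<lambda>z. sqrt (v z / u z)) x"
    using one_le_group_product_sum[OF groups_disjoint _ _ t] by blast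
  also have "\<dots> \<le> (\<Sum>v\<in>far_offspring j q. group_product_sum m (nat \<lceil>real m / 6\<rceil>) G (\<lambda>z. sqrt (v z / u z)) x)"
    using v props(3) by (intro member_le_sum) auto
  also have "\<dots> \<le> level_majorant j x"
    unfolding level_majorant_def u_def using q near_nodes[OF j]
    by (intro member_le_sum[where f = "\<lambda>q. \<Sum>v\<in>far_offspring j q. group_product_sum m (nat \<lceil>real m / 6\<rceil>) G
        (\<lambda>z. sqrt (v z / near_offspring \<mu> off d c f j q z)) x"]) auto
  finally show ?thesis .
qed

lemma estimator_run_at:
  assumes "x \<in> space P"
  shows "estimator_run \<mu> F B \<alpha> \<beta> d c \<nu>1 Jt Lv off f N k G (A x) (est (A x)) J1"
proof unfold_locales
  show "\<forall>i<N. A x i \<in> B" using corruption assms by blast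
  then show "estimator_path \<mu> N k G (c / 2 - 1) c d Jt \<nu>1 off (A x) (est (A x))"
    using estimator by blast
qed (use f_in alpha_pos c_ge d_pos J1 entropy_le k groups_in in auto)

lemma loss_le_risk_majorant:
  assumes x: "x \<in> space P"
  shows "ennreal ((L2dist \<mu> (est (A x) Jt) f)\<^sup>2) \<le> risk_majorant x"
proof -
  interpret run: estimator_run \<mu> F B \<alpha> \<beta> d c \<nu>1 Jt Lv off f N k G "A x" "est (A x)" J1
    by (rule estimator_run_at[OF x])
  define w where "w j = 25 * d\<^sup>2 / 4^(j - 2)" for j :: nat
  have fails: "ennreal (if run.comparison_fails j then w j else 0) \<le> ennreal (w j) * level_majorant j x"
    if j: "j \<in> {2..J1}" for j
  proof (cases "run.comparison_fails j")
    case True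
    then obtain q v where "q \<in> near_nodes j" "v \<in> far_offspring j q"
      "\<not> majority_prefers N k G (A x) (near_offspring \<mu> off d c f j q) v"
      unfolding run.comparison_fails_def near_nodes_def far_offspring_def by blast
    then have "1 \<le> level_majorant j x" using one_le_level_majorant[OF x] j by auto
    then show ?thesis using True mult_left_mono[of 1 "level_majorant j x" "ennreal (w j)"] by simp
  qed simp
  have "ennreal ((L2dist \<mu> (est (A x) Jt) f)\<^sup>2)
      \<le> ennreal (25 * d\<^sup>2 / 4^(J1 - 1) + (\<Sum>j\<in>{2..J1}. if run.comparison_fails j then w j else 0))"
    using run.path_sq_dist_le unfolding w_def by (rule ennreal_leI)
  also have "\<dots> = ennreal (25 * d\<^sup>2 / 4^(J1 - 1)) + (\<Sum>j\<in>{2..J1}. ennreal (if run.comparison_fails j then w j else 0))"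
    unfolding w_def by (simp add: sum_nonneg ennreal_plus)
  also have "\<dots> \<le> risk_majorant x"
    unfolding risk_majorant_def w_def[symmetric] using fails by (intro add_left_mono sum_mono) auto
  finally show ?thesis .
qed

lemma prob_space_density_f: "prob_space (density \<mu> (\<lambda>x. ennreal (f x)))"
  using F_dens f_in alpha_pos prob_space_density_dens_class[OF space_eq, of \<alpha> f \<beta>] by auto

lemma borel_measurable_sqrt_ratio_density:
  assumes "u \<in> F" "v \<in> F"
  shows "(\<lambda>z. sqrt (v z / u z)) \<in> borel_measurable (density \<mu> (\<lambda>x. ennreal (f x)))"
  using bounded_measurable_sqrt_ratio[OF space_eq alpha_pos] assms F_dens
  unfolding bounded_measurable_def by (auto cong: measurable_cong_sets)

lemma borel_measurable_far_term:
  assumes "2 \<le> j" "j \<le> J1" "q \<in> near_nodes j" "v \<in> far_offspring j q"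
  shows "group_product_sum m t G (\<lambda>z. sqrt (v z / near_offspring \<mu> off d c f j q z)) \<in> borel_measurable P"
proof (rule borel_measurable_group_product_sum)
  have "near_offspring \<mu> off d c f j q \<in> F" "v \<in> F"
    using near_node_offspring(1,5)[OF assms(1-3)] assms(4) by auto
  then show "(\<lambda>z. sqrt (v z / near_offspring \<mu> off d c f j q z)) \<in> borel_measurable (density \<mu> (\<lambda>x. ennreal (f x)))"
    by (rule borel_measurable_sqrt_ratio_density)
qed (use groups_in in auto)

lemma borel_measurable_level_majorant:
  assumes "2 \<le> j" "j \<le> J1"
  shows "level_majorant j \<in> borel_measurable P"
  unfolding level_majorant_def using borel_measurable_far_term[OF assms] by measurable

lemma borel_measurable_risk_majorant: "risk_majorant \<in> borel_measurable P"
  unfolding risk_majorant_def using borel_measurable_level_majorant by measurable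

lemma nn_integral_level_majorant_le:
  assumes j: "2 \<le> j" "j \<le> J1"
  shows "(\<integral>\<^sup>+ x. level_majorant j x \<partial>P)
    \<le> ennreal (real M ^ 2 * exp (- (real N * (c / 2 - 1)\<^sup>2 * (d / (2^(j - 2) * c))\<^sup>2 / (192 * \<beta>))))"
proof -
  define e where "e = exp (- (real N * (c / 2 - 1)\<^sup>2 * (d / (2^(j - 2) * c))\<^sup>2 / (192 * \<beta>)))"
  define t where "t = nat \<lceil>real m / 6\<rceil>"
  have single: "(\<integral>\<^sup>+ x. group_product_sum m t G (\<lambda>z. sqrt (v z / near_offspring \<mu> off d c f j q z)) x \<partial>P) \<le> ennreal e"
    if q: "q \<in> near_nodes j" and v: "v \<in> far_offspring j q" for q v
    unfolding e_def
  proof (rule nn_integral_group_product_sum_le[OF space_eq alpha_pos C_large])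
    note props = near_node_offspring[OF j q]
    show "f \<in> dens_class \<mu> B \<alpha> \<beta>" "near_offspring \<mu> off d c f j q \<in> dens_class \<mu> B \<alpha> \<beta>"
      "v \<in> dens_class \<mu> B \<alpha> \<beta>"
      using f_in props(1,5) v F_dens by auto
    show "0 \<le> d / (2^(j - 2) * c)" using d_pos c_ge by simp
    show "L2dist \<mu> (near_offspring \<mu> off d c f j q) f \<le> d / (2^(j - 2) * c)" by (rule props(2))
    show "(c / 2 - 1) * (d / (2^(j - 2) * c)) \<le> L2dist \<mu> (near_offspring \<mu> off d c f j q) v"
      using v unfolding far_offspring_def by auto
    show "real m * ln 2 \<le> real N * (c / 2 - 1)\<^sup>2 * (d / (2^(j - 2) * c))\<^sup>2 / (192 * \<beta>)"
    proof -
      have "real m = 3 * \<epsilon> * real N" using k eps by (simp add: real_of_nat_div field_simps)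
      moreover have "real N * (3 * \<epsilon> * ln 2) \<le> real N * ((c / 2 - 1)\<^sup>2 * (d / (2^(j - 2) * c))\<^sup>2 / (192 * \<beta>))"
        using scales_large j by (intro mult_left_mono) auto
      ultimately show ?thesis by (simp add: mult_ac)
    qed
    show "real m / 6 \<le> real t" unfolding t_def by linarith
  qed (use groups_disjoint groups_card k groups_in in auto)
  have "(\<integral>\<^sup>+ x. level_majorant j x \<partial>P)
      = (\<Sum>q\<in>near_nodes j. \<Sum>v\<in>far_offspring j q.
           \<integral>\<^sup>+ x. group_product_sum m t G (\<lambda>z. sqrt (v z / near_offspring \<mu> off d c f j q z)) x \<partial>P)"
    unfolding level_majorant_def t_def using borel_measurable_far_term[OF j]
    by (simp add: nn_integral_sum borel_measurable_sum)
  also have "\<dots> \<le> (\<Sum>q\<in>near_nodes j. \<Sum>v\<in>far_offspring j q. ennreal e)"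
    using single by (intro sum_mono) auto
  also have "\<dots> \<le> (\<Sum>q\<in>near_nodes j. of_nat M * ennreal e)"
    using near_node_offspring[OF j] by (intro sum_mono) (simp add: mult_right_mono)
  also have "\<dots> \<le> of_nat M * (of_nat M * ennreal e)"
    using near_nodes[OF j] by (simp add: mult_right_mono)
  also have "\<dots> = ennreal (real M ^ 2 * e)"
    unfolding e_def by (simp add: ennreal_mult' ennreal_of_nat_eq_real_of_nat power2_eq_square mult.assoc)
  finally show ?thesis unfolding e_def .
qed

lemma nn_integral_risk_majorant_le:
  "(\<integral>\<^sup>+ x. risk_majorant x \<partial>P) \<le> ennreal (25 * d\<^sup>2 / 4^(J1 - 1) + (\<Sum>j\<in>{2..J1}. 25 * d\<^sup>2 / 4^(j - 2) *
      (real M ^ 2 * exp (- (real N * (c / 2 - 1)\<^sup>2 * (d / (2^(j - 2) * c))\<^sup>2 / (192 * \<beta>))))))"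
proof -
  define a where "a j = 25 * d\<^sup>2 / 4^(j - 2)" for j :: nat
  define b where "b j = real M ^ 2 * exp (- (real N * (c / 2 - 1)\<^sup>2 * (d / (2^(j - 2) * c))\<^sup>2 / (192 * \<beta>)))"
    for j :: nat
  have ab: "0 \<le> a j" "0 \<le> b j" for j unfolding a_def b_def by simp_all
  interpret P: prob_space P
    using prob_space_density_f by (rule prob_space_PiM)
  have [measurable]: "level_majorant j \<in> borel_measurable P" if "j \<in> {2..J1}" for j
    using borel_measurable_level_majorant that by auto
  have "(\<integral>\<^sup>+ x. risk_majorant x \<partial>P)
      = ennreal (25 * d\<^sup>2 / 4^(J1 - 1)) + (\<Sum>j\<in>{2..J1}. ennreal (a j) * (\<integral>\<^sup>+ x. level_majorant j x \<partial>P))"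
    unfolding risk_majorant_def a_def
    by (simp add: nn_integral_add nn_integral_sum nn_integral_cmult P.emeasure_space_1)
  also have "\<dots> \<le> ennreal (25 * d\<^sup>2 / 4^(J1 - 1)) + (\<Sum>j\<in>{2..J1}. ennreal (a j) * ennreal (b j))"
    unfolding b_def using nn_integral_level_majorant_le
    by (intro add_left_mono sum_mono mult_left_mono) auto
  also have "(\<Sum>j\<in>{2..J1}. ennreal (a j) * ennreal (b j)) = ennreal (\<Sum>j\<in>{2..J1}. a j * b j)"
    using ab by (simp add: ennreal_mult[symmetric] sum_ennreal)
  also have "ennreal (25 * d\<^sup>2 / 4^(J1 - 1)) + \<dots> = ennreal (25 * d\<^sup>2 / 4^(J1 - 1) + (\<Sum>j\<in>{2..J1}. a j * b j))"
    using ab by (simp add: sum_nonneg ennreal_plus)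
  finally show ?thesis unfolding a_def b_def .
qed

lemma outer_risk_le_min:
  "outer_exp P (\<lambda>x. (L2dist \<mu> (est (A x) Jt) f)\<^sup>2) \<le> ennreal (min (d\<^sup>2)
     (25 * d\<^sup>2 / 4^(J1 - 1) + (\<Sum>j\<in>{2..J1}. 25 * d\<^sup>2 / 4^(j - 2) *
      (real M ^ 2 * exp (- (real N * (c / 2 - 1)\<^sup>2 * (d / (2^(j - 2) * c))\<^sup>2 / (192 * \<beta>)))))))"
  (is "_ \<le> ennreal (min (d\<^sup>2) ?T)")
proof -
  interpret P: prob_space P
    using prob_space_density_f by (rule prob_space_PiM)
  have "(L2dist \<mu> (est (A x) Jt) f)\<^sup>2 \<le> d\<^sup>2" if x: "x \<in> space P" for x
  proof -
    interpret run: estimator_run \<mu> F B \<alpha> \<beta> d c \<nu>1 Jt Lv off f N k G "A x" "est (A x)" J1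
      by (rule estimator_run_at[OF x])
    show ?thesis
      using L2dist_le_diam[OF run.path_in_F f_in] J1 by (intro power_mono L2dist_nonneg) auto
  qed
  then have "outer_exp P (\<lambda>x. (L2dist \<mu> (est (A x) Jt) f)\<^sup>2) \<le> (\<integral>\<^sup>+ x. min (ennreal (d\<^sup>2)) (risk_majorant x) \<partial>P)"
    using loss_le_risk_majorant borel_measurable_risk_majorant
    by (intro outer_exp_le_nn_integral) (auto simp: ennreal_leI)
  also have "\<dots> \<le> min (\<integral>\<^sup>+ x. ennreal (d\<^sup>2) \<partial>P) (\<integral>\<^sup>+ x. risk_majorant x \<partial>P)"
    by (intro min.boundedI nn_integral_mono) auto
  also have "\<dots> \<le> min (ennreal (d\<^sup>2)) (ennreal ?T)"
    using nn_integral_risk_majorant_le by (simp add: P.emeasure_space_1 min.coboundedI2)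
  also have "\<dots> = ennreal (min (d\<^sup>2) ?T)"
    by (intro min_ennreal add_nonneg_nonneg sum_nonneg) auto
  finally show ?thesis .
qed

end

lemma exists_maximal_prefix:
  assumes "1 \<le> n"
  shows "\<exists>J. 1 \<le> J \<and> J \<le> n \<and> (\<forall>i\<in>{2..J}. P i) \<and> (J = n \<or> \<not> P (Suc J))"
  using assms
proof (induction n rule: nat_induct_at_least)
  case base
  then show ?case by (intro exI[of _ 1]) auto
next
  case (Suc n)
  then obtain J where J: "1 \<le> J" "J \<le> n" "\<forall>i\<in>{2..J}. P i" "J = n \<or> \<not> P (Suc J)" by blast
  show ?case
  proof (cases "J = n \<and> P (Suc n)")
    case True
    then show ?thesis using J by (intro exI[of _ "Suc n"]) (auto simp: le_Suc_eq)
  next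
    case False
    then show ?thesis using J by (intro exI[of _ J]) auto
  qed
qed

text \<open>The last level \<open>J1\<close> of the analysis either lies within \<open>r\<close> levels of \<open>Jbar\<close>, so that
  \<open>d\<^sup>2 / 4^(J1-1)\<close> is comparable to \<open>\<tau>\<^sup>2\<close>, or stops because the next scale falls below the
  corruption level \<open>\<epsilon>\<close>.\<close>

lemma stopping_level_term_le:
  fixes c C10' \<beta> \<epsilon> d :: real and Jbar J1 r :: nat
  defines "C \<equiv> c / 2 - 1" and "\<tau> \<equiv> tauJ C10' (c / 2 - 1) d Jbar"
  assumes pos: "0 < c" "0 < C10'" "0 < C" "0 < \<beta>" "0 \<le> \<epsilon>" and J: "1 \<le> Jbar" "1 \<le> J1"
    and stop: "Jbar \<le> J1 + r \<or> C\<^sup>2 * (d / (2^(J1 - 1) * c))\<^sup>2 / (192 * \<beta>) < 3 * \<epsilon> * ln 2"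
  shows "25 * d\<^sup>2 / 4^(J1 - 1) \<le> 25 * 4^r * c\<^sup>2 / (4 * C10') * \<tau>\<^sup>2 + 25 * 576 * \<beta> * ln 2 * c\<^sup>2 / C\<^sup>2 * \<epsilon>"
proof (cases "Jbar \<le> J1 + r")
  case True
  have "(4::real)^(Jbar - 1) \<le> 4^(J1 - 1) * 4^r"
    using True J unfolding power_add[symmetric] by (intro power_increasing) auto
  then have "d\<^sup>2 / 4^(J1 - 1) \<le> d\<^sup>2 * 4^r / 4^(Jbar - 1)"
    by (simp add: field_simps mult_left_mono)
  also have "\<dots> = 4^r * c\<^sup>2 * \<tau>\<^sup>2 / (4 * C10')"
    unfolding \<tau>_def tauJ_sq[OF pos(2) J(1)] using pos(1,2) by (simp add: field_simps)
  finally have "25 * d\<^sup>2 / 4^(J1 - 1) \<le> 25 * 4^r * c\<^sup>2 / (4 * C10') * \<tau>\<^sup>2" by simp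
  moreover have "0 \<le> 25 * 576 * \<beta> * ln 2 * c\<^sup>2 / C\<^sup>2 * \<epsilon>" using pos by simp
  ultimately show ?thesis by linarith
next
  case False
  then have "C\<^sup>2 * (d\<^sup>2 / 4^(J1 - 1) / c\<^sup>2) / (192 * \<beta>) < 3 * \<epsilon> * ln 2"
    using stop power2_two_pow[of "J1 - 1"] by (simp add: power_divide power_mult_distrib)
  then have "d\<^sup>2 / 4^(J1 - 1) < 3 * \<epsilon> * ln 2 * (192 * \<beta>) * c\<^sup>2 / C\<^sup>2"
    using pos by (simp add: field_simps)
  moreover have "3 * \<epsilon> * ln 2 * (192 * \<beta>) * c\<^sup>2 / C\<^sup>2 = 576 * \<beta> * ln 2 * c\<^sup>2 / C\<^sup>2 * \<epsilon>"
    by (simp add: field_simps)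
  ultimately have "25 * (d\<^sup>2 / 4^(J1 - 1)) \<le> 25 * (576 * \<beta> * ln 2 * c\<^sup>2 / C\<^sup>2 * \<epsilon>)" by linarith
  then have "25 * d\<^sup>2 / 4^(J1 - 1) \<le> 25 * 576 * \<beta> * ln 2 * c\<^sup>2 / C\<^sup>2 * \<epsilon>" by simp
  moreover have "0 \<le> 25 * 4^r * c\<^sup>2 / (4 * C10') * \<tau>\<^sup>2" using pos by simp
  ultimately show ?thesis by linarith
qed

lemma failure_terms_le:
  fixes c C10' \<beta> d :: real and Jbar J1 r N M :: nat
  defines "C \<equiv> c / 2 - 1" and "\<tau> \<equiv> tauJ C10' (c / 2 - 1) d Jbar"
  assumes pos: "0 < c" "0 < C10'" "0 < \<beta>" and J: "J1 + r \<le> Jbar"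
    and r: "1 \<le> C\<^sup>2 / (192 * \<beta> * C10') * 4^r"
    and N: "ln 2 < real N * \<tau>\<^sup>2" "2 * ln ((real M)\<^sup>2) < real N * \<tau>\<^sup>2"
  shows "(\<Sum>j\<in>{2..J1}. 25 * d\<^sup>2 / 4^(j - 2) *
      (real M ^ 2 * exp (- (real N * C\<^sup>2 * (d / (2^(j - 2) * c))\<^sup>2 / (192 * \<beta>)))))
    \<le> 100 * (25 * c\<^sup>2 / C10') * 4^r * \<tau>\<^sup>2"
proof -
  define x where "x = real N * \<tau>\<^sup>2"
  define b where "b = C\<^sup>2 / (192 * \<beta> * C10')"
  have M: "(real M)\<^sup>2 \<le> exp (x / 2)"
  proof (cases "M = 0")
    case False
    then have "exp (ln ((real M)\<^sup>2)) = (real M)\<^sup>2" by simp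
    moreover have "ln ((real M)\<^sup>2) \<le> x / 2" using N(2) unfolding x_def by simp
    ultimately show ?thesis by (metis exp_le_cancel_iff)
  qed simp
  have "25 * d\<^sup>2 / 4^(j - 2) * (real M ^ 2 * exp (- (real N * C\<^sup>2 * (d / (2^(j - 2) * c))\<^sup>2 / (192 * \<beta>))))
      = 25 * c\<^sup>2 / C10' * \<tau>\<^sup>2 * (4^(Jbar - j) * ((real M)\<^sup>2 * exp (- (b * x * 4^(Jbar - j)))))"
    if "j \<in> {2..J1}" for j
  proof -
    have j: "2 \<le> j" "j \<le> Jbar" using that J by auto
    have weight: "25 * d\<^sup>2 / 4^(j - 2) = 25 * (c\<^sup>2 / C10' * \<tau>\<^sup>2 * 4^(Jbar - j))"
      using level_weight_eq_tauJ[OF pos(1,2) j, of d] unfolding \<tau>_def by (metis times_divide_eq_right)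
    have "real N * C\<^sup>2 * (d / (2^(j - 2) * c))\<^sup>2 / (192 * \<beta>) = b * x * 4^(Jbar - j)"
      unfolding level_scale_sq_eq_tauJ[OF pos(1,2) j] b_def x_def \<tau>_def using pos by (simp add: field_simps)
    then show ?thesis unfolding weight by (simp add: field_simps)
  qed
  then have "(\<Sum>j\<in>{2..J1}. 25 * d\<^sup>2 / 4^(j - 2) *
      (real M ^ 2 * exp (- (real N * C\<^sup>2 * (d / (2^(j - 2) * c))\<^sup>2 / (192 * \<beta>)))))
    = 25 * c\<^sup>2 / C10' * \<tau>\<^sup>2 * (\<Sum>j\<in>{2..J1}. 4^(Jbar - j) * ((real M)\<^sup>2 * exp (- (b * x * 4^(Jbar - j)))))"
    by (simp add: sum_distrib_left)
  also have "\<dots> \<le> 25 * c\<^sup>2 / C10' * \<tau>\<^sup>2 * (100 * 4^r)"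
    using exp_sum_le_geometric[OF J r[folded b_def] N(1)[folded x_def] _ M] pos
    by (intro mult_left_mono) auto
  finally show ?thesis by (simp add: mult_ac)
qed

definition c_threshold :: "real \<Rightarrow> real \<Rightarrow> real" where
  "c_threshold \<alpha> \<beta> = 6 + 16 * \<beta> + 4 * \<beta> / \<alpha>\<^sup>2 + 2 * (sqrt (1/\<alpha>) / sqrt (cab \<alpha> \<beta>))"

lemma large_c_constants:
  assumes "0 < \<alpha>" "\<alpha> < \<beta>" "c_threshold \<alpha> \<beta> \<le> c"
  shows "4 \<le> c" "8 * \<beta> + 2 * \<beta> / \<alpha>\<^sup>2 \<le> c / 2 - 1" "1 + sqrt (1/\<alpha>) / sqrt (cab \<alpha> \<beta>) < c / 2 - 1"
proof -
  have "0 \<le> sqrt (1/\<alpha>) / sqrt (cab \<alpha> \<beta>)" "0 \<le> \<beta> / \<alpha>\<^sup>2" "0 < \<beta>"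
    using assms cab_pos[OF assms(1,2)] by auto
  then show "4 \<le> c" "8 * \<beta> + 2 * \<beta> / \<alpha>\<^sup>2 \<le> c / 2 - 1" "1 + sqrt (1/\<alpha>) / sqrt (cab \<alpha> \<beta>) < c / 2 - 1"
    using assms(3) unfolding c_threshold_def by linarith+
qed

definition risk_constant :: "real \<Rightarrow> real \<Rightarrow> real \<Rightarrow> real \<Rightarrow> nat \<Rightarrow> real" where
  "risk_constant c \<alpha> \<beta> \<phi> r = 1 + (25 * 4^r * c\<^sup>2 / (4 * C10 \<alpha> \<beta> (c / 2 - 1) \<phi>)
      + 25 * 576 * \<beta> * ln 2 * c\<^sup>2 / (c / 2 - 1)\<^sup>2 + 100 * (25 * c\<^sup>2 / C10 \<alpha> \<beta> (c / 2 - 1) \<phi>) * 4^r)"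

lemma risk_constant_pos: "0 < C10 \<alpha> \<beta> (c / 2 - 1) \<phi> \<Longrightarrow> 0 < \<beta> \<Longrightarrow> 0 < risk_constant c \<alpha> \<beta> \<phi> r"
  unfolding risk_constant_def by (intro add_pos_nonneg add_nonneg_nonneg) auto

lemma min_le_mult_min:
  fixes T D K K' m :: real
  assumes "T \<le> K * m" "0 \<le> K" "1 + K \<le> K'" "0 \<le> m" "0 \<le> D"
  shows "min D T \<le> K' * min m D"
proof (cases "m \<le> D")
  case True
  have "min D T \<le> K * m" using assms by linarith
  also have "\<dots> \<le> K' * m" using assms by (intro mult_right_mono) auto
  finally show ?thesis using True by simp
next
  case False
  have "min D T \<le> D" by simp
  also have "\<dots> \<le> K' * D" using assms by (simp add: mult_le_cancel_right1)
  finally show ?thesis using False by simp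
qed

locale robust_estimation = multiscale_tree +
  fixes f :: "'a \<Rightarrow> real" and N k :: nat and \<epsilon> :: real and G :: "nat \<Rightarrow> nat set"
    and A :: "(nat \<Rightarrow> 'a) \<Rightarrow> nat \<Rightarrow> 'a" and est :: "(nat \<Rightarrow> 'a) \<Rightarrow> nat \<Rightarrow> 'a \<Rightarrow> real"
    and \<phi> :: real and Jbar r :: nat
  assumes f_in: "f \<in> F" and alpha_pos: "0 < \<alpha>" and alpha_less: "\<alpha> < \<beta>" and star: "star_shaped F"
    and c_ge: "4 \<le> c" and C_large: "8 * \<beta> + 2 * \<beta> / \<alpha>\<^sup>2 \<le> c / 2 - 1"
    and C10_pos: "0 < C10 \<alpha> \<beta> (c / 2 - 1) \<phi>"
    and r: "1 \<le> (c / 2 - 1)\<^sup>2 / (192 * \<beta> * C10 \<alpha> \<beta> (c / 2 - 1) \<phi>) * 4^r"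
    and k: "0 < k" "k dvd N" and eps: "0 < \<epsilon>" "real k = 1 / (3 * \<epsilon>)"
    and groups_cover: "(\<Union>j<N div k. G j) = {..<N}" and groups_card: "\<forall>j<N div k. card (G j) = k"
    and groups_disjoint: "\<forall>i<N div k. \<forall>j<N div k. i \<noteq> j \<longrightarrow> G i \<inter> G j = {}"
    and corruption: "\<forall>x\<in>space (PiM {..<N} (\<lambda>_. density \<mu> (\<lambda>x. ennreal (f x)))). (\<forall>i<N. A x i \<in> B) \<and>
              real (card {i\<in>{..<N}. A x i \<noteq> x i}) \<le> \<epsilon> * real N"
    and Jbar: "(Jbar = 1 \<and> \<not> (\<exists>J\<ge>1. Jcond \<mu> F (C10 \<alpha> \<beta> (c / 2 - 1) \<phi>) (c / 2 - 1) c d N J)) \<or>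
           (1 \<le> Jbar \<and> Jcond \<mu> F (C10 \<alpha> \<beta> (c / 2 - 1) \<phi>) (c / 2 - 1) c d N Jbar \<and>
              (\<forall>J>Jbar. \<not> Jcond \<mu> F (C10 \<alpha> \<beta> (c / 2 - 1) \<phi>) (c / 2 - 1) c d N J))"
    and Jbar_le: "Jbar \<le> Jt"
    and estimator: "\<forall>X. (\<forall>i<N. X i \<in> B) \<longrightarrow> estimator_path \<mu> N k G (c / 2 - 1) c d Jt \<nu>1 off X (est X)"
begin

abbreviation "P \<equiv> PiM {..<N} (\<lambda>_. density \<mu> (\<lambda>x. ennreal (f x)))"
abbreviation "C10' \<equiv> C10 \<alpha> \<beta> (c / 2 - 1) \<phi>"
abbreviation "\<tau> \<equiv> tauJ C10' (c / 2 - 1) d Jbar"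

lemma beta_pos: "0 < \<beta>" using alpha_pos alpha_less by simp

lemma C_pos: "0 < c / 2 - 1"
  using C_large beta_pos by (smt (verit) divide_nonneg_nonneg zero_le_power2)

lemma estimate_in_F:
  assumes "x \<in> space P"
  shows "est (A x) Jt \<in> F"
proof -
  have "1 \<le> Jbar" using Jbar by auto
  have "\<forall>i<N. A x i \<in> B" using corruption assms by blast
  then have "estimator_path \<mu> N k G (c / 2 - 1) c d Jt \<nu>1 off (A x) (est (A x))"
    using estimator by blast
  then have "est (A x) Jt \<in> Lv Jt"
    by (rule estimator_path_in_level) (use \<open>1 \<le> Jbar\<close> Jbar_le in auto)
  moreover have "1 \<le> Jt" using \<open>1 \<le> Jbar\<close> Jbar_le by simp
  ultimately show ?thesis using level_subset_F[of Jt] by auto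
qed

lemma outer_risk_zero_diam:
  assumes "d = 0"
  shows "outer_exp P (\<lambda>x. (L2dist \<mu> (est (A x) Jt) f)\<^sup>2) \<le> 0"
proof -
  have "L2dist \<mu> (est (A x) Jt) f = 0" if "x \<in> space P" for x
    using L2dist_le_diam[OF estimate_in_F[OF that] f_in] L2dist_nonneg assms by (metis order_antisym)
  then have "outer_exp P (\<lambda>x. (L2dist \<mu> (est (A x) Jt) f)\<^sup>2) \<le> (\<integral>\<^sup>+ x. 0 \<partial>P)"
    by (intro outer_exp_le_nn_integral) auto
  then show ?thesis by simp
qed

lemma entropy_bounded:
  assumes "0 < d" "2 \<le> J1" "J1 \<le> Jbar"
  defines "M \<equiv> loc_entropy \<mu> F (d / 2^(Jbar - 2)) (2 * c)"
  shows "M \<noteq> \<infinity>" "\<And>j. 2 \<le> j \<Longrightarrow> j \<le> J1 \<Longrightarrow>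
    loc_entropy \<mu> F (d / 2^(j - 2)) (2 * c) \<noteq> \<infinity> \<and> the_enat (loc_entropy \<mu> F (d / 2^(j - 2)) (2 * c)) \<le> the_enat M"
proof -
  have "Jcond \<mu> F C10' (c / 2 - 1) c d N Jbar" using Jbar assms by auto
  then show fin: "M \<noteq> \<infinity>"
    unfolding Jcond_def Let_def M_def using tauJ_scale[OF _ C10_pos, of c Jbar d] c_ge assms by simp
  fix j assume j: "2 \<le> j" "j \<le> J1"
  have le: "loc_entropy \<mu> F (d / 2^(j - 2)) (2 * c) \<le> M"
    unfolding M_def using assms(1,3) j c_ge
    by (intro loc_entropy_antimono[OF star]) (auto intro!: divide_left_mono power_increasing)
  obtain n where n: "M = enat n" using fin by auto
  with le obtain n' where "loc_entropy \<mu> F (d / 2^(j - 2)) (2 * c) = enat n'" using enat_ile by blast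
  then show "loc_entropy \<mu> F (d / 2^(j - 2)) (2 * c) \<noteq> \<infinity> \<and>
      the_enat (loc_entropy \<mu> F (d / 2^(j - 2)) (2 * c)) \<le> the_enat M"
    using le n by simp
qed

lemma risk_total_le:
  assumes "0 < d" and J1: "1 \<le> J1" "J1 \<le> max 1 (Jbar - r)"
    and stop: "J1 = max 1 (Jbar - r) \<or>
      \<not> 3 * \<epsilon> * ln 2 \<le> (c / 2 - 1)\<^sup>2 * (d / (2^(Suc J1 - 2) * c))\<^sup>2 / (192 * \<beta>)"
    and M: "2 \<le> J1 \<Longrightarrow> M = the_enat (loc_entropy \<mu> F (d / 2^(Jbar - 2)) (2 * c))"
  shows "25 * d\<^sup>2 / 4^(J1 - 1) + (\<Sum>j\<in>{2..J1}. 25 * d\<^sup>2 / 4^(j - 2) *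
      (real M ^ 2 * exp (- (real N * (c / 2 - 1)\<^sup>2 * (d / (2^(j - 2) * c))\<^sup>2 / (192 * \<beta>)))))
    \<le> (risk_constant c \<alpha> \<beta> \<phi> r - 1) * max (\<tau>\<^sup>2) \<epsilon>"
proof -
  define K1 where "K1 = 25 * 4^r * c\<^sup>2 / (4 * C10')"
  define K2 where "K2 = 25 * 576 * \<beta> * ln 2 * c\<^sup>2 / (c / 2 - 1)\<^sup>2"
  define K3 where "K3 = 100 * (25 * c\<^sup>2 / C10') * 4^r"
  have K: "0 \<le> K1" "0 \<le> K2" "0 \<le> K3" unfolding K1_def K2_def K3_def using C10_pos beta_pos by auto
  have "1 \<le> Jbar" using Jbar by auto
  have "Jbar \<le> J1 + r \<or> (c / 2 - 1)\<^sup>2 * (d / (2^(J1 - 1) * c))\<^sup>2 / (192 * \<beta>) < 3 * \<epsilon> * ln 2"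
    using stop J1 by (auto simp: not_le)
  then have first: "25 * d\<^sup>2 / 4^(J1 - 1) \<le> K1 * \<tau>\<^sup>2 + K2 * \<epsilon>"
    unfolding K1_def K2_def using c_ge C10_pos C_pos beta_pos eps \<open>1 \<le> Jbar\<close> J1
    by (intro stopping_level_term_le) auto
  have terms: "(\<Sum>j\<in>{2..J1}. 25 * d\<^sup>2 / 4^(j - 2) *
      (real M ^ 2 * exp (- (real N * (c / 2 - 1)\<^sup>2 * (d / (2^(j - 2) * c))\<^sup>2 / (192 * \<beta>))))) \<le> K3 * \<tau>\<^sup>2"
  proof (cases "2 \<le> J1")
    case True
    then have "Jcond \<mu> F C10' (c / 2 - 1) c d N Jbar" using Jbar J1 by auto
    moreover have "\<tau> * c / sqrt C10' = d / 2^(Jbar - 2)"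
      using tauJ_scale[OF _ C10_pos] c_ge True J1 by simp
    ultimately have "ln 2 < real N * \<tau>\<^sup>2" "2 * ln ((real M)\<^sup>2) < real N * \<tau>\<^sup>2"
      unfolding Jcond_def Let_def M[OF True] by auto
    then show ?thesis
      unfolding K3_def using c_ge C10_pos beta_pos J1 True r
      by (intro failure_terms_le) auto
  qed (use K in simp)
  have "25 * d\<^sup>2 / 4^(J1 - 1) + (\<Sum>j\<in>{2..J1}. 25 * d\<^sup>2 / 4^(j - 2) *
      (real M ^ 2 * exp (- (real N * (c / 2 - 1)\<^sup>2 * (d / (2^(j - 2) * c))\<^sup>2 / (192 * \<beta>)))))
      \<le> K1 * max (\<tau>\<^sup>2) \<epsilon> + K2 * max (\<tau>\<^sup>2) \<epsilon> + K3 * max (\<tau>\<^sup>2) \<epsilon>"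
    using first terms K by (smt (verit) max.cobounded1 max.cobounded2 mult_left_mono)
  also have "\<dots> = (risk_constant c \<alpha> \<beta> \<phi> r - 1) * max (\<tau>\<^sup>2) \<epsilon>"
    unfolding risk_constant_def K1_def K2_def K3_def by (simp add: algebra_simps)
  finally show ?thesis .
qed

lemma outer_risk_le:
  "outer_exp P (\<lambda>x. (L2dist \<mu> (est (A x) Jt) f)\<^sup>2)
     \<le> ennreal (risk_constant c \<alpha> \<beta> \<phi> r * min (max (\<tau>\<^sup>2) \<epsilon>) (d\<^sup>2))"
proof (cases "d = 0")
  case True
  then show ?thesis using outer_risk_zero_diam by (simp add: order_trans[OF _ zero_le])
next
  case False
  then have "0 < d" using diam_nonneg by simp
  define scale_ok where
    "scale_ok j \<longleftrightarrow> 3 * \<epsilon> * ln 2 \<le> (c / 2 - 1)\<^sup>2 * (d / (2^(j - 2) * c))\<^sup>2 / (192 * \<beta>)" for j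
  obtain J1 where J1: "1 \<le> J1" "J1 \<le> max 1 (Jbar - r)" "\<forall>i\<in>{2..J1}. scale_ok i"
    and stop: "J1 = max 1 (Jbar - r) \<or> \<not> scale_ok (Suc J1)"
    using exists_maximal_prefix[of "max 1 (Jbar - r)" scale_ok] by auto
  define M where "M = (if 2 \<le> J1 then the_enat (loc_entropy \<mu> F (d / 2^(Jbar - 2)) (2 * c)) else 0)"
  have "J1 \<le> Jbar" "J1 \<le> Jt" using J1 Jbar Jbar_le by auto
  interpret risk: robust_risk \<mu> F B \<alpha> \<beta> d c \<nu>1 Jt Lv off f N k \<epsilon> G A est J1 M
    using entropy_bounded[OF \<open>0 < d\<close> _ \<open>J1 \<le> Jbar\<close>] J1 \<open>J1 \<le> Jt\<close> \<open>0 < d\<close> unfolding M_def scale_ok_def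
    by unfold_locales (use f_in alpha_pos c_ge k eps groups_cover groups_card groups_disjoint corruption
        estimator C_large in auto)
  note total = risk_total_le[OF \<open>0 < d\<close> J1(1,2) stop[unfolded scale_ok_def]]
  have "outer_exp P (\<lambda>x. (L2dist \<mu> (est (A x) Jt) f)\<^sup>2) \<le> ennreal (min (d\<^sup>2)
     (25 * d\<^sup>2 / 4^(J1 - 1) + (\<Sum>j\<in>{2..J1}. 25 * d\<^sup>2 / 4^(j - 2) *
      (real M ^ 2 * exp (- (real N * (c / 2 - 1)\<^sup>2 * (d / (2^(j - 2) * c))\<^sup>2 / (192 * \<beta>)))))))"
    by (rule risk.outer_risk_le_min)
  also have "\<dots> \<le> ennreal (risk_constant c \<alpha> \<beta> \<phi> r * min (max (\<tau>\<^sup>2) \<epsilon>) (d\<^sup>2))"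
    using total[of M] C10_pos beta_pos eps unfolding M_def
    by (intro ennreal_leI min_le_mult_min) (auto simp: risk_constant_def)
  finally show ?thesis .
qed

end

theorem mainTheorem4:
  fixes \<alpha> \<beta> \<phi> :: real
  assumes "0 < \<alpha>" "\<alpha> < \<beta>" "1 < \<phi>" "\<phi> < 3/2"
  shows "\<exists>c0::real. \<forall>c \<ge> c0. \<forall>(B :: 'a::euclidean_space set) (\<mu> :: 'a measure) F d.
     compact B \<and> B \<in> sets lborel \<and> emeasure lborel B > 0 \<and>
     prob_space \<mu> \<and> sets \<mu> = sets (restrict_space borel B) \<and>
     F \<subseteq> dens_class \<mu> B \<alpha> \<beta> \<and> star_shaped F \<and> d = L2diam \<mu> F
     \<longrightarrow> (\<exists>Kc > 0. \<forall>f N k \<epsilon> G A \<nu>1 Jt Lv off est Jbar.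
        (let C = c / 2 - 1; C10' = C10 \<alpha> \<beta> C \<phi>;
             Pm = PiM {..<N} (\<lambda>_. density \<mu> (\<lambda>x. ennreal (f x)))
         in
          f \<in> F \<and>
          0 < \<epsilon> \<and> \<epsilon> \<le> 1/3 \<and> 0 < k \<and> real k = 1 / (3 * \<epsilon>) \<and> k dvd N \<and>
          (\<Union>j<N div k. G j) = {..<N} \<and> (\<forall>j<N div k. card (G j) = k) \<and>
          (\<forall>i<N div k. \<forall>j<N div k. i \<noteq> j \<longrightarrow> G i \<inter> G j = {}) \<and>
          (\<forall>x\<in>space Pm. (\<forall>i<N. A x i \<in> B) \<and>
              real (card {i\<in>{..<N}. A x i \<noteq> x i}) \<le> \<epsilon> * real N) \<and>
          ((Jbar = 1 \<and> \<not> (\<exists>J\<ge>1. Jcond \<mu> F C10' C c d N J)) \<or>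
           (1 \<le> Jbar \<and> Jcond \<mu> F C10' C c d N Jbar \<and> (\<forall>J>Jbar. \<not> Jcond \<mu> F C10' C c d N J))) \<and>
          Jbar \<le> Jt \<and>
          valid_tree \<mu> F d c \<nu>1 Jt Lv off \<and>
          (\<forall>X. (\<forall>i<N. X i \<in> B) \<longrightarrow> estimator_path \<mu> N k G C c d Jt \<nu>1 off X (est X))
          \<longrightarrow> outer_exp Pm (\<lambda>x. (L2dist \<mu> (est (A x) Jt) f)^2)
                \<le> ennreal (Kc * min (max ((tauJ C10' C d Jbar)^2) \<epsilon>) (d^2))))"
  unfolding Let_def
  apply (rule exI[of _ "c_threshold \<alpha> \<beta>"], intro allI impI, elim conjE)
  subgoal premises setting for c B \<mu> F d
  proof -
    note c = large_c_constants[OF assms(1,2) setting(1)]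
    have C10: "0 < C10 \<alpha> \<beta> (c / 2 - 1) \<phi>" by (rule C10_pos[OF assms(1,2,4) c(3)])
    obtain r where "1 / ((c / 2 - 1)\<^sup>2 / (192 * \<beta> * C10 \<alpha> \<beta> (c / 2 - 1) \<phi>)) < 4 ^ r"
      using real_arch_pow[of 4] by auto
    then have r: "1 \<le> (c / 2 - 1)\<^sup>2 / (192 * \<beta> * C10 \<alpha> \<beta> (c / 2 - 1) \<phi>) * 4 ^ r"
      using C10 c assms by (simp add: field_simps)
    have "space \<mu> = B" using sets_eq_imp_space_eq[OF setting(6)] by (simp add: space_restrict_space)
    show ?thesis
      apply (rule exI[of _ "risk_constant c \<alpha> \<beta> \<phi> r"], intro conjI allI impI)
      subgoal using C10 assms by (intro risk_constant_pos) auto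
      apply (elim conjE)
      subgoal premises data for f N k \<epsilon> G A \<nu>1 Jt Lv off est Jbar
      proof -
        interpret robust_estimation \<mu> F B \<alpha> \<beta> d c \<nu>1 Jt Lv off f N k \<epsilon> G A est \<phi> Jbar r
          by (intro robust_estimation.intro multiscale_tree.intro multiscale_tree_axioms.intro
              robust_estimation_axioms.intro;
              insert setting data assms c C10 r \<open>space \<mu> = B\<close>; (assumption | linarith))
        show ?thesis by (rule outer_risk_le)
      qed
      done
  qed
  done

end
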